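(* Let $\mathfrak D=(\mathfrak D^p_{m,m-1})_{p\ge0,m\ge1}$ be the Courant–Dorfman algebra of differential operators of a Courant algebroid $E$. Then $\mathfrak D$ is a graded subalgebra of $(\mathcal A,\cdot)$; more precisely, for $\omega\in\mathfrak D^p_{m,m-1}$ and $\eta\in\mathfrak D^q_{n,n-1}$, one has $\omega\cdot\eta\in\mathfrak D^{p+q}_{\max\{m,n\},\max\{m,n\}-1}$.
   Context: Let $M$ be a smooth manifold, $\mathcal R=C^\infty(M)$, $\Omega^1=\Gamma(T^*M)$, and $(E,[\![\cdot,\cdot]\!],\langle\cdot,\cdot\rangle,\rho)$ a Courant algebroid over $M$; $\mathcal E=\Gamma(E)$. Cochains. For $p\ge1$ a $p$-cochain is a tuple $\omega=(\omega_0,\dots,\omega_{[p/2]})$ of $\mathbb R$-multilinear maps $\omega_k:\mathcal E^{\otimes(p-2k)}\otimes(\Omega^1)^{\otimes k}\to\mathcal R$, symmetric in the $\Omega^1$-arguments, such that for $1\le i<p-2k$: $\omega_k(\dots,e_i,e_{i+1},\dots;\alpha_1,\dots,\alpha_k)+\omega_k(\dots,e_{i+1},e_i,\dots;\alpha_1,\dots,\alpha_k)=-\omega_{k+1}(\dots,\widehat{e_i},\widehat{e_{i+1}},\dots;d\langle e_i,e_{i+1}\rangle,\alpha_1,\dots,\alpha_k)$. $0$-cochains are elements of $\mathcal R$. They form the graded algebra $\mathcal A$ with product: for $\omega$ of degree $p$, $\eta$ of degree $q$, $(\omega\cdot\eta)_k(e_1,\dots,e_{p+q-2k};\alpha_1,\dots,\alpha_k)=\sum_{i+j=k,\,i\le[p/2],\,j\le[q/2]}\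 \sum_{\sigma\in sh(p-2i,q-2j)}\sum_{\tau\in sh(i,j)}(-1)^{|\sigma|}\omega_i(e_{\sigma(1)},\dots,e_{\sigma(p-2i)};\alpha_{\tau(1)},\dots,\alpha_{\tau(i)})\,\eta_j(e_{\sigma(p-2i+1)},\dots,e_{\sigma(p+q-2k)};\alpha_{\tau(i+1)},\dots,\alpha_{\tau(k)})$ ($sh(a,b)$ = $(a,b)$-shuffles). Differential operators: an $\mathbb R$-multilinear map has order $\le0$ in a given argument if it is $\mathcal R$-linear in it, and order $\le s$ in that argument if for every $f\in\mathcal R$ its symbol (the map obtained by replacing that argument $x$ by $fx$ and subtracting $f$ times the original value) has order $\le s-1$ in that argument. For $m\ge1$ and $p\ge2$, $\mathfrak D^p_{m,m-1}$ is the set of $p$-cochains such that each $\omega_k$ has order $\le m$ in each $\Omega^1$-argument, order $\le m$ in each of the first $p-2k-1$ $\mathcal E$-arguments and order $\le m-1$ in the last $\mathcal E$-argument; for $p=1$, $\mathfrak D^1_m$ consists of $\omega=(\omega_0)$ with $\omega_0$ of order $\le m$ in its unique argument; $\mathfrak D^0=\mathcal R$.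
   Formalization: A 1-cochain $\omega=(\omega_0)$ lies in $\mathfrak D^1_{m,m-1}$ only when $\omega_0$ has order at most m-1 in its unique argument, rather than order at most m as for $\mathfrak D^1_m$. The statement above fails without it. *)

theory Defs
  imports Complex_Main "HOL-Combinatorics.Permutations" "HOL-Library.Multiset"
begin

text \<open>Algebraic data underlying the cochain algebra of a Courant algebroid:
  R = C-infinity(M) (a commutative real algebra), the R-modules of sections of E and of
  1-forms (with scalar multiplications sE, sO), the de Rham differential d : R -> Omega^1
  (an R-valued derivation, real linear) and the symmetric R-bilinear pairing.\<close>

definition CD_data ::
  "('r::{comm_ring_1,real_algebra_1} \<Rightarrow> 'e::ab_group_add \<Rightarrow> 'e) \<Rightarrow> ('r \<Rightarrow> 'o::ab_group_add \<Rightarrow> 'o)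
   \<Rightarrow> ('r \<Rightarrow> 'o) \<Rightarrow> ('e \<Rightarrow> 'e \<Rightarrow> 'r) \<Rightarrow> bool" where
  "CD_data sE sO d pair \<longleftrightarrow>
     module sE \<and> module sO \<and>
     (\<forall>f g. d (f + g) = d f + d g) \<and>
     (\<forall>c f. d (scaleR c f) = sO (of_real c) (d f)) \<and>
     (\<forall>f g. d (f * g) = sO f (d g) + sO g (d f)) \<and>
     (\<forall>x y. pair x y = pair y x) \<and>
     (\<forall>x y z. pair (x + y) z = pair x z + pair y z) \<and>
     (\<forall>f x y. pair (sE f x) y = f * pair x y)"

definition shuffles :: "nat \<Rightarrow> nat \<Rightarrow> (nat \<Rightarrow> nat) set" where
  "shuffles a b = {\<sigma>. \<sigma> permutes {0..<a+b} \<and> strict_mono_on {0..<a} \<sigma> \<and> strict_mono_on {a..<a+b} \<sigma>}"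

text \<open>A p-cochain is represented by k \<mapsto> omega_k, omega_k taking a list of p-2k sections
  and a list of k one-forms (only k \<le> p div 2 and these lengths are relevant).
  A 0-cochain f corresponds to omega 0 [] [] = f.\<close>
definition is_cochain ::
  "('r::{comm_ring_1,real_algebra_1} \<Rightarrow> 'e::ab_group_add \<Rightarrow> 'e) \<Rightarrow> ('r \<Rightarrow> 'o::ab_group_add \<Rightarrow> 'o)
   \<Rightarrow> ('r \<Rightarrow> 'o) \<Rightarrow> ('e \<Rightarrow> 'e \<Rightarrow> 'r) \<Rightarrow> nat \<Rightarrow> (nat \<Rightarrow> 'e list \<Rightarrow> 'o list \<Rightarrow> 'r) \<Rightarrow> bool" where
  "is_cochain sE sO d pair p \<omega> \<longleftrightarrow>
    (\<forall>k \<le> p div 2. \<forall>es as. length es = p - 2*k \<and> length as = k \<longrightarrow>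
       (\<forall>i < length es.
          (\<forall>x y. \<omega> k (es[i := x + y]) as = \<omega> k (es[i := x]) as + \<omega> k (es[i := y]) as) \<and>
          (\<forall>c x. \<omega> k (es[i := sE (of_real c) x]) as = of_real c * \<omega> k (es[i := x]) as)) \<and>
       (\<forall>i < length as.
          (\<forall>x y. \<omega> k es (as[i := x + y]) = \<omega> k es (as[i := x]) + \<omega> k es (as[i := y])) \<and>
          (\<forall>c x. \<omega> k es (as[i := sO (of_real c) x]) = of_real c * \<omega> k es (as[i := x]))) \<and>
       (\<forall>as'. mset as' = mset as \<longrightarrow> \<omega> k es as' = \<omega> k es as) \<and>
       (\<forall>i. i + 1 < p - 2*k \<longrightarrow>
          \<omega> k es as + \<omega> k (es[i := es ! (i+1), i+1 := es ! i]) as =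
          - \<omega> (k+1) (take i es @ drop (i+2) es) (d (pair (es ! i) (es ! (i+1))) # as)))"

fun has_order :: "('r::comm_ring_1 \<Rightarrow> 'x \<Rightarrow> 'x) \<Rightarrow> nat \<Rightarrow> ('x \<Rightarrow> 'r) \<Rightarrow> bool" where
  "has_order sc 0 F = (\<forall>f x. F (sc f x) = f * F x)"
| "has_order sc (Suc s) F = (\<forall>f. has_order sc s (\<lambda>x. F (sc f x) - f * F x))"

definition in_D ::
  "('r::{comm_ring_1,real_algebra_1} \<Rightarrow> 'e::ab_group_add \<Rightarrow> 'e) \<Rightarrow> ('r \<Rightarrow> 'o::ab_group_add \<Rightarrow> 'o)
   \<Rightarrow> ('r \<Rightarrow> 'o) \<Rightarrow> ('e \<Rightarrow> 'e \<Rightarrow> 'r) \<Rightarrow> nat \<Rightarrow> nat \<Rightarrow> (nat \<Rightarrow> 'e list \<Rightarrow> 'o list \<Rightarrow> 'r) \<Rightarrow> bool" where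
  "in_D sE sO d pair p m \<omega> \<longleftrightarrow> is_cochain sE sO d pair p \<omega> \<and>
    (\<forall>k \<le> p div 2. \<forall>es as. length es = p - 2*k \<and> length as = k \<longrightarrow>
       (\<forall>i < length as. has_order sO m (\<lambda>a. \<omega> k es (as[i := a]))) \<and>
       (\<forall>i < length es. has_order sE (if i + 1 = length es then m - 1 else m) (\<lambda>x. \<omega> k (es[i := x]) as)))"

definition cprod ::
  "nat \<Rightarrow> (nat \<Rightarrow> 'e list \<Rightarrow> 'o list \<Rightarrow> 'r::comm_ring_1) \<Rightarrow> nat \<Rightarrow> (nat \<Rightarrow> 'e list \<Rightarrow> 'o list \<Rightarrow> 'r)
   \<Rightarrow> nat \<Rightarrow> 'e list \<Rightarrow> 'o list \<Rightarrow> 'r" where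
  "cprod p \<omega> q \<eta> k es as =
    (\<Sum>i | i \<le> k \<and> i \<le> p div 2 \<and> k - i \<le> q div 2.
      \<Sum>\<sigma>\<in>shuffles (p - 2*i) (q - 2*(k-i)). \<Sum>\<tau>\<in>shuffles i (k-i).
        of_int (sign \<sigma>) *
        \<omega> i (map (\<lambda>l. es ! \<sigma> l) [0..<p - 2*i]) (map (\<lambda>l. as ! \<tau> l) [0..<i]) *
        \<eta> (k-i) (map (\<lambda>l. es ! \<sigma> l) [p - 2*i..<p + q - 2*k]) (map (\<lambda>l. as ! \<tau> l) [i..<k]))"

end

theory Submission
  imports Defs "HOL-Library.Ramsey"
begin

text \<open>A sum over \<open>(a, b)\<close>-shuffles \<open>\<sigma>\<close> weighted by \<open>sign \<sigma>\<close> is a sum over the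
  \<open>a\<close>-element sets \<open>S\<close> of positions sent to the first factor, weighted by
  \<open>(-1)^(\<Sum>S - \<Sum>{..<a})\<close>. In this form every defining property of a cochain passes from the
  factors to their product. An argument of the product is an argument of exactly one factor, so
  linearity and the order bounds are inherited; the last section argument of the product is the
  last section argument of whichever factor receives it, which gives the bound \<open>max m n - 1\<close>
  there. Permuting the 1-forms permutes the index sets. Swapping two adjacent sections either
  swaps them inside one factor, where the relation of that factor produces the term with
  \<open>d\<langle>e\<^sub>i, e\<^sub>i\<^sub>+\<^sub>1\<rangle>\<close> of the next component of the product, or separates
  them, and those terms cancel in pairs under the transposition of the index set.\<close>

lemma nths_cong:
  assumes "\<And>i. i < length xs \<Longrightarrow> i \<in> A \<longleftrightarrow> i \<in> B"
  shows "nths xs A = nths xs B"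
  unfolding nths_def using assms
  by (intro arg_cong[where f="map fst"] filter_cong) (auto simp: set_zip)

lemma nths_append3:
  "nths (L @ M @ R) S =
     nths L S @ nths M {i. i + length L \<in> S} @ nths R {i. i + length L + length M \<in> S}"
  by (simp add: nths_append ac_simps)

lemma length_nths_nsets:
  assumes "S \<in> nsets {..<length xs} a"
  shows "length (nths xs S) = a" and "length (nths xs (-S)) = length xs - a"
proof -
  have S: "S \<subseteq> {..<length xs}" "card S = a" using assms by (auto simp: nsets_def)
  have "{i. i < length xs \<and> i \<in> S} = S" "{i. i < length xs \<and> i \<in> -S} = {..<length xs} - S"
    using S by auto
  then show "length (nths xs S) = a" "length (nths xs (-S)) = length xs - a"
    using S card_Diff_subset[OF finite_subset[OF S(1)] S(1)] by (simp_all add: length_nths)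
qed

lemma finite_nsets_lessThan [simp]: "finite (nsets {..<N::nat} a)"
  by (rule finite_imp_finite_nsets) simp

lemma nsets_lessThan_Diff: "U \<in> nsets {..<n} a \<Longrightarrow> {..<n} - U \<in> nsets {..<n} (n - a)"
  by (auto simp: nsets_def card_Diff_subset)

lemma nths_insert_greatest:
  assumes "\<forall>x\<in>A. x < m" "m < length xs"
  shows "nths xs (insert m A) = nths xs A @ [xs!m]"
proof -
  have xs: "xs = take m xs @ [xs!m] @ drop (Suc m) xs"
    using assms(2) by (simp add: id_take_nth_drop)
  have lt: "length (take m xs) = m" using assms(2) by simp
  have "nths (take m xs) (insert m A) = nths (take m xs) A"
    using lt by (intro nths_cong) auto
  moreover have "nths (drop (Suc m) xs) {i. i + m + 1 \<in> B} = []" if "\<forall>x\<in>B. x \<le> m" for B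
    using that by (subst nths_cong[where B="{}"]) auto
  moreover have "\<forall>x\<in>insert m A. x \<le> m" "\<forall>x\<in>A. x \<le> m" using assms(1) by auto
  moreover have "m \<notin> A" using assms(1) by auto
  ultimately show ?thesis
    by (subst (1 2) xs, simp only: nths_append3 lt) simp
qed

lemma map_nth_strict_mono_on_eq_nths:
  assumes "strict_mono_on {c..<c+a} \<sigma>" "\<forall>l\<in>{c..<c+a}. \<sigma> l < length xs"
  shows "map (\<lambda>l. xs ! \<sigma> l) [c..<c+a] = nths xs (\<sigma> ` {c..<c+a})"
  using assms
proof (induction a)
  case (Suc a)
  have "strict_mono_on {c..<c+a} \<sigma>"
    using Suc.prems(1) by (auto simp: strict_mono_on_def)
  then have IH: "map (\<lambda>l. xs ! \<sigma> l) [c..<c+a] = nths xs (\<sigma> ` {c..<c+a})"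
    using Suc by auto
  have "\<sigma> ` {c..<c+Suc a} = insert (\<sigma> (c+a)) (\<sigma> ` {c..<c+a})"
    by (auto simp: less_Suc_eq)
  moreover have "\<forall>x\<in>\<sigma> ` {c..<c+a}. x < \<sigma> (c+a)"
    using Suc.prems(1) by (auto simp: strict_mono_on_def)
  ultimately show ?case
    using Suc.prems(2) IH by (simp add: nths_insert_greatest)
qed simp

lemma map_strict_mono_on_upt:
  fixes \<sigma> :: "nat \<Rightarrow> 'a::linorder"
  assumes "strict_mono_on {c..<c+a} \<sigma>"
  shows "map \<sigma> [c..<c+a] = sorted_list_of_set (\<sigma> ` {c..<c+a})"
proof -
  have "sorted_wrt (<) (map \<sigma> [c..<c+a])"
    unfolding sorted_wrt_map
    by (rule sorted_wrt_mono_rel[OF _ sorted_wrt_upt])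
       (use assms in \<open>auto simp: strict_mono_on_def\<close>)
  moreover have "length (map \<sigma> [c..<c+a]) = card (\<sigma> ` {c..<c+a})"
    using card_image[OF strict_mono_on_imp_inj_on[OF assms]] by simp
  ultimately show ?thesis
    using sorted_list_of_set_unique[of "\<sigma> ` {c..<c+a}" "map \<sigma> [c..<c+a]"] by auto
qed

lemma strict_mono_on_eq_if_image_eq:
  fixes \<sigma> \<sigma>' :: "nat \<Rightarrow> 'a::linorder"
  assumes "strict_mono_on {c..<c+a} \<sigma>" "strict_mono_on {c..<c+a} \<sigma>'"
    and "\<sigma> ` {c..<c+a} = \<sigma>' ` {c..<c+a}" "l \<in> {c..<c+a}"
  shows "\<sigma> l = \<sigma>' l"
proof -
  have "map \<sigma> [c..<c+a] ! (l - c) = map \<sigma>' [c..<c+a] ! (l - c)"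
    using map_strict_mono_on_upt[OF assms(1)] map_strict_mono_on_upt[OF assms(2)] assms(3)
    by simp
  then show ?thesis using assms(4) by auto
qed

lemma nths_list_update:
  assumes "j < length xs"
  shows "nths (xs[j:=x]) U = (if j \<in> U then (nths xs U)[card {y\<in>U. y < j} := x] else nths xs U)"
proof -
  define L where "L = take j xs"
  define R where "R = drop (Suc j) xs"
  have xs': "xs[j:=x] = L @ [x] @ R"
    using assms by (simp add: L_def R_def upd_conv_take_nth_drop)
  have "xs = L @ [xs!j] @ R" using assms by (simp add: L_def R_def id_take_nth_drop)
  then obtain z where xs: "xs = L @ [z] @ R" by blast
  have lL: "length L = j" using assms by (simp add: L_def)
  have "length (nths L U) = card {y\<in>U. y < j}"
    using lL unfolding length_nths by (intro arg_cong[where f=card]) auto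
  then show ?thesis
    using lL unfolding xs'
    by (subst (1 2) xs, simp only: nths_append3) (simp add: list_update_append)
qed

lemma card_less_in_nsets:
  assumes "U \<in> nsets {..<n} a" "j \<in> U"
  shows "card {y\<in>U. y < j} < a" and "Suc j = n \<Longrightarrow> Suc (card {y\<in>U. y < j}) = a"
proof -
  have U: "finite U" "card U = a" "U \<subseteq> {..<n}" using assms(1) by (auto simp: nsets_def)
  have "card {y\<in>U. y < j} \<le> card (U - {j})" using U(1) by (intro card_mono) auto
  then show "card {y\<in>U. y < j} < a"
    using card_Diff1_less[OF U(1) assms(2)] U(2) by simp
  assume "Suc j = n"
  then have "{y\<in>U. y < j} = U - {j}" using U(3) by auto
  moreover have "a > 0" using U(1,2) assms(2) card_gt_0_iff by blast
  ultimately show "Suc (card {y\<in>U. y < j}) = a"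
    using U assms(2) by (simp add: card_Suc_Diff1)
qed

lemma nths_Cons_vimage:
  "nths (x # xs) T = (if 0 \<in> T then x # nths xs (Suc -` T) else nths xs (Suc -` T))"
  by (simp add: nths_Cons vimage_def)

lemma image_Suc_vimage_Suc: "0 \<notin> T \<Longrightarrow> Suc ` (Suc -` T) = T"
proof (intro equalityI subsetI)
  fix x assume x: "x \<in> T" "0 \<notin> T"
  then obtain y where "x = Suc y" by (cases x) auto
  with x show "x \<in> Suc ` (Suc -` T)" by auto
qed auto

lemma vimage_Suc_insert_0: "Suc -` insert 0 A = Suc -` A"
  by auto

lemma card_image_Suc: "card (Suc ` S) = card S"
  by (rule card_image[OF inj_on_subset[OF inj_Suc subset_UNIV]])

lemma sum_nsets_Suc_without_0:
  "(\<Sum>T | T \<in> nsets {..<Suc n} i \<and> 0 \<notin> T. h T) = (\<Sum>S\<in>nsets {..<n} i. h (Suc ` S))"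
proof (rule sum.reindex_bij_witness[where j="vimage Suc" and i="image Suc"])
  fix T assume "T \<in> {T. T \<in> nsets {..<Suc n} i \<and> 0 \<notin> T}"
  then have T: "T \<subseteq> {..<Suc n}" "finite T" "card T = i" "0 \<notin> T" by (auto simp: nsets_def)
  show eq: "Suc ` (Suc -` T) = T" using T(4) by (rule image_Suc_vimage_Suc)
  then show "h (Suc ` (Suc -` T)) = h T" by simp
  have "card (Suc -` T) = i" using T(3) card_image_Suc[of "Suc -` T"] eq by simp
  then show "Suc -` T \<in> nsets {..<n} i" using T(1,2) by (auto simp: nsets_def finite_vimageI)
next
  fix S assume "S \<in> nsets {..<n} i"
  then show "Suc ` S \<in> {T. T \<in> nsets {..<Suc n} i \<and> 0 \<notin> T}" "Suc -` Suc ` S = S"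
    by (auto simp: nsets_def card_image_Suc)
qed

lemma sum_nsets_Suc_with_0:
  "(\<Sum>T | T \<in> nsets {..<Suc n} (Suc i) \<and> 0 \<in> T. h T) = (\<Sum>S\<in>nsets {..<n} i. h (insert 0 (Suc ` S)))"
proof (rule sum.reindex_bij_witness[where j="vimage Suc" and i="\<lambda>S. insert 0 (Suc ` S)"])
  fix T assume "T \<in> {T. T \<in> nsets {..<Suc n} (Suc i) \<and> 0 \<in> T}"
  then have T: "T \<subseteq> {..<Suc n}" "finite T" "card T = Suc i" "0 \<in> T" by (auto simp: nsets_def)
  have "Suc -` (T - {0}) = Suc -` T" by auto
  then have rest: "Suc ` (Suc -` T) = T - {0}"
    using image_Suc_vimage_Suc[of "T - {0}"] by simp
  then show eq: "insert 0 (Suc ` (Suc -` T)) = T" using T(4) by auto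
  then show "h (insert 0 (Suc ` (Suc -` T))) = h T" by simp
  have "card (Suc -` T) = i" using T(2-4) card_image_Suc[of "Suc -` T"] rest by simp
  then show "Suc -` T \<in> nsets {..<n} i" using T(1,2) by (auto simp: nsets_def finite_vimageI)
next
  fix S assume "S \<in> nsets {..<n} i"
  moreover have "0 \<notin> Suc ` S" by auto
  ultimately show "insert 0 (Suc ` S) \<in> {T. T \<in> nsets {..<Suc n} (Suc i) \<and> 0 \<in> T}"
    "Suc -` insert 0 (Suc ` S) = S"
    by (auto simp: nsets_def card_image_Suc)
qed

lemma sum_nsets_split:
  fixes h :: "nat set \<Rightarrow> 'a::comm_monoid_add"
  shows "sum h (nsets {..<N} i)
    = (\<Sum>T | T \<in> nsets {..<N} i \<and> P T. h T) + (\<Sum>T | T \<in> nsets {..<N} i \<and> \<not> P T. h T)"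
proof -
  have "sum h (nsets {..<N} i)
      = sum h ({T. T \<in> nsets {..<N} i \<and> P T} \<union> {T. T \<in> nsets {..<N} i \<and> \<not> P T})"
    by (rule arg_cong[where f="sum h"]) blast
  also have "\<dots> = (\<Sum>T | T \<in> nsets {..<N} i \<and> P T. h T) + (\<Sum>T | T \<in> nsets {..<N} i \<and> \<not> P T. h T)"
    by (rule sum.union_disjoint) auto
  finally show ?thesis .
qed

section \<open>Shuffles and their signs\<close>

lemma shufflesD:
  assumes "\<sigma> \<in> shuffles a b"
  shows "\<sigma> permutes {..<a+b}" "strict_mono_on {0..<0+a} \<sigma>" "strict_mono_on {a..<a+b} \<sigma>"
  using assms unfolding shuffles_def by (auto simp: atLeast0LessThan)

lemma shuffle_image_fst:
  assumes "\<sigma> \<in> shuffles a b"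
  shows "\<sigma> ` {..<a} \<in> nsets {..<a+b} a"
proof -
  note perm = shufflesD(1)[OF assms]
  have "inj_on \<sigma> {..<a}"
    using permutes_inj_on[OF perm] by (rule inj_on_subset) auto
  moreover have "\<sigma> ` {..<a} \<subseteq> {..<a+b}"
    using permutes_image[OF perm] by auto
  ultimately show ?thesis
    unfolding nsets_def by (simp add: card_image)
qed

lemma shuffle_image_snd:
  assumes "\<sigma> \<in> shuffles a b"
  shows "\<sigma> ` {a..<a+b} = {..<a+b} - \<sigma> ` {..<a}"
proof -
  note perm = shufflesD(1)[OF assms]
  have "\<sigma> ` {a..<a+b} = \<sigma> ` ({..<a+b} - {..<a})" by (rule arg_cong[where f="image \<sigma>"]) auto
  also have "\<dots> = \<sigma> ` {..<a+b} - \<sigma> ` {..<a}"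
    using image_set_diff[OF permutes_inj[OF perm]] .
  finally show ?thesis
    using permutes_image[OF perm] by simp
qed

lemma inj_on_shuffle_image: "inj_on (\<lambda>\<sigma>. \<sigma> ` {..<a}) (shuffles a b)"
proof (rule inj_onI, rule ext)
  fix \<sigma> \<sigma>' l
  assume s: "\<sigma> \<in> shuffles a b" "\<sigma>' \<in> shuffles a b" and eq: "\<sigma> ` {..<a} = \<sigma>' ` {..<a}"
  note f = shufflesD[OF s(1)] and f' = shufflesD[OF s(2)]
  consider "l < a" | "a \<le> l" "l < a + b" | "a + b \<le> l" by linarith
  then show "\<sigma> l = \<sigma>' l"
  proof cases
    case 1
    then show ?thesis
      using strict_mono_on_eq_if_image_eq[OF f(2) f'(2)] eq by (simp add: atLeast0LessThan)
  next
    case 2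
    then show ?thesis
      using strict_mono_on_eq_if_image_eq[OF f(3) f'(3)] eq
        shuffle_image_snd[OF s(1)] shuffle_image_snd[OF s(2)] by simp
  next
    case 3
    then show ?thesis using permutes_not_in[OF f(1)] permutes_not_in[OF f'(1)] by simp
  qed
qed

lemma shuffle_exists_image:
  assumes "S \<in> nsets {..<a+b} a"
  obtains \<sigma> where "\<sigma> \<in> shuffles a b" "\<sigma> ` {..<a} = S"
proof -
  let ?C = "{..<a+b} - S"
  define Ls where "Ls = sorted_list_of_set S"
  define Lc where "Lc = sorted_list_of_set ?C"
  have S: "finite S" "card S = a" "S \<subseteq> {..<a+b}" using assms by (auto simp: nsets_def)
  have lengths: "length Ls = a" "length Lc = b"
    using S card_Diff_subset[OF S(1) S(3)] unfolding Ls_def Lc_def by auto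
  have sets: "set Ls = S" "set Lc = ?C" unfolding Ls_def Lc_def using S by auto
  have sorted: "sorted_wrt (<) Ls" "sorted_wrt (<) Lc"
    unfolding Ls_def Lc_def by (auto intro: strict_sorted_list_of_set)
  define \<sigma> where "\<sigma> l = (if l < a then Ls!l else if l < a+b then Lc!(l-a) else l)" for l
  have im1: "\<sigma> ` {..<a} = S"
  proof -
    have "\<sigma> ` {..<a} = (\<lambda>l. Ls!l) ` {..<a}" by (auto simp: \<sigma>_def)
    then show ?thesis using lengths sets by (auto simp: set_conv_nth)
  qed
  have im2: "\<sigma> ` {a..<a+b} = ?C"
  proof -
    have "\<sigma> ` {a..<a+b} = (\<lambda>l. Lc!(l-a)) ` {a..<a+b}" by (auto simp: \<sigma>_def)
    also have "\<dots> = (\<lambda>l. Lc!l) ` {..<b}"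
    proof (intro set_eqI iffI)
      fix z assume "z \<in> (\<lambda>l. Lc!(l-a)) ` {a..<a+b}"
      then obtain l where "l \<in> {a..<a+b}" "z = Lc!(l-a)" by auto
      then show "z \<in> (\<lambda>l. Lc!l) ` {..<b}" by (intro image_eqI[where x="l-a"]) auto
    next
      fix z assume "z \<in> (\<lambda>l. Lc!l) ` {..<b}"
      then obtain l where "l < b" "z = Lc!l" by auto
      then show "z \<in> (\<lambda>l. Lc!(l-a)) ` {a..<a+b}" by (intro image_eqI[where x="l+a"]) auto
    qed
    finally show ?thesis using lengths sets by (auto simp: set_conv_nth)
  qed
  have "{..<a+b} = {..<a} \<union> {a..<a+b}" by auto
  then have onto: "\<sigma> ` {..<a+b} = {..<a+b}" using im1 im2 S(3) by (auto simp: image_Un)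
  then have "\<sigma> permutes {..<a+b}"
    by (intro bij_imp_permutes) (auto simp: bij_betw_def \<sigma>_def eq_card_imp_inj_on)
  moreover have "strict_mono_on {0..<a} \<sigma>"
    unfolding strict_mono_on_def \<sigma>_def using sorted(1) lengths
    by (auto intro: sorted_wrt_nth_less)
  moreover have "strict_mono_on {a..<a+b} \<sigma>"
  proof (rule strict_mono_onI)
    fix r s assume "r \<in> {a..<a+b}" "s \<in> {a..<a+b}" "r < s"
    then show "\<sigma> r < \<sigma> s"
      using sorted_wrt_nth_less[OF sorted(2), of "r - a" "s - a"] lengths by (simp add: \<sigma>_def)
  qed
  ultimately have "\<sigma> \<in> shuffles a b"
    by (simp add: shuffles_def atLeast0LessThan)
  then show ?thesis using im1 by (rule that)
qed

lemma bij_betw_shuffles_nsets: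
  "bij_betw (\<lambda>\<sigma>. \<sigma> ` {..<a}) (shuffles a b) (nsets {..<a+b} a)"
  unfolding bij_betw_def
proof
  show "(\<lambda>\<sigma>. \<sigma> ` {..<a}) ` shuffles a b = nsets {..<a+b} a"
  proof
    show "(\<lambda>\<sigma>. \<sigma> ` {..<a}) ` shuffles a b \<subseteq> nsets {..<a+b} a"
      using shuffle_image_fst by blast
    show "nsets {..<a+b} a \<subseteq> (\<lambda>\<sigma>. \<sigma> ` {..<a}) ` shuffles a b"
    proof
      fix S assume "S \<in> nsets {..<a+b} a"
      then obtain \<sigma> where "\<sigma> \<in> shuffles a b" "\<sigma> ` {..<a} = S"
        by (rule shuffle_exists_image)
      then show "S \<in> (\<lambda>\<sigma>. \<sigma> ` {..<a}) ` shuffles a b" by blast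
    qed
  qed
qed (rule inj_on_shuffle_image)

text \<open>The sign of the shuffle with first block \<open>S\<close> is \<open>(-1)^(\<Sum>S - \<Sum>{..<a})\<close>; the sum replaces
  the difference to avoid truncated subtraction.\<close>

definition subset_sign :: "nat \<Rightarrow> nat set \<Rightarrow> int" where
  "subset_sign a S = (-1) ^ (\<Sum>S + \<Sum>{..<a})"

lemma strict_mono_on_transpose_Suc_comp:
  fixes \<sigma> :: "'a::order \<Rightarrow> nat"
  assumes "strict_mono_on A \<sigma>" "\<And>r s. r \<in> A \<Longrightarrow> s \<in> A \<Longrightarrow> \<not> (\<sigma> r = y \<and> \<sigma> s = Suc y)"
  shows "strict_mono_on A (transpose y (Suc y) \<circ> \<sigma>)"
proof (rule strict_mono_onI)
  fix r s assume "r \<in> A" "s \<in> A" "r < s"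
  then have "\<sigma> r < \<sigma> s" "\<not> (\<sigma> r = y \<and> \<sigma> s = Suc y)"
    using assms by (auto dest: strict_mono_onD)
  then show "(transpose y (Suc y) \<circ> \<sigma>) r < (transpose y (Suc y) \<circ> \<sigma>) s"
    by (auto simp: transpose_def)
qed

lemma sum_transpose_Suc_image:
  fixes S :: "nat set"
  assumes "finite S" "y \<notin> S" "Suc y \<in> S"
  shows "\<Sum>(transpose y (Suc y) ` S) + 1 = \<Sum>S"
proof -
  have "transpose y (Suc y) ` S = insert y (S - {Suc y})"
    using assms(2,3) by (auto simp: transpose_def image_iff)
  then show ?thesis
    using assms by (simp add: sum.remove)
qed

lemma subset_sign_transpose:
  assumes "finite S" "(j \<in> S) \<noteq> (Suc j \<in> S)"
  shows "subset_sign a (transpose j (Suc j) ` S) = - subset_sign a S"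
proof -
  let ?t = "transpose j (Suc j)"
  have "\<Sum>(?t ` S) + 1 = \<Sum>S \<or> \<Sum>S + 1 = \<Sum>(?t ` S)"
  proof (cases "j \<in> S")
    case True
    then have "j \<notin> ?t ` S" "Suc j \<in> ?t ` S" "?t ` ?t ` S = S"
      using assms(2) by (auto simp: image_iff transpose_def)
    then show ?thesis
      using sum_transpose_Suc_image[of "?t ` S" j] assms(1) by simp
  qed (use assms sum_transpose_Suc_image in auto)
  then show ?thesis
  proof
    assume h: "\<Sum>(?t ` S) + 1 = \<Sum>S"
    show ?thesis unfolding subset_sign_def by (simp add: power_add flip: h)
  next
    assume h: "\<Sum>S + 1 = \<Sum>(?t ` S)"
    show ?thesis unfolding subset_sign_def by (simp add: power_add flip: h)
  qed
qed

lemma down_closed_eq_lessThan_card: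
  fixes S :: "nat set"
  assumes "finite S" "\<And>y. Suc y \<in> S \<Longrightarrow> y \<in> S"
  shows "S = {..<card S}"
proof (cases "S = {}")
  case False
  have down: "x \<in> S \<Longrightarrow> z \<le> x \<Longrightarrow> z \<in> S" for x z
    by (induction x arbitrary: z) (use assms(2) le_Suc_eq in auto)
  have "S = {..Max S}"
    using down Max_ge[OF assms(1)] Max_in[OF assms(1) False] by auto
  then have "S = {..<Suc (Max S)}" by (simp add: lessThan_Suc_atMost)
  then show ?thesis by (metis card_lessThan)
qed simp

lemma shuffle_transpose_Suc:
  assumes "\<sigma> \<in> shuffles a b" "y \<notin> \<sigma> ` {..<a}" "Suc y \<in> \<sigma> ` {..<a}"
  shows "transpose y (Suc y) \<circ> \<sigma> \<in> shuffles a b"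
proof -
  note f = shufflesD[OF assms(1)]
  have "Suc y < a + b" using assms(3) shuffle_image_fst[OF assms(1)] by (auto simp: nsets_def)
  then have t: "transpose y (Suc y) permutes {..<a+b}" by (intro permutes_swap_id) auto
  have "strict_mono_on {0..<0+a} (transpose y (Suc y) \<circ> \<sigma>)"
    using assms(2) by (intro strict_mono_on_transpose_Suc_comp[OF f(2)]) auto
  moreover have "\<sigma> s \<notin> \<sigma> ` {..<a}" if "s \<in> {a..<a+b}" for s
    using imageI[OF that, of \<sigma>] shuffle_image_snd[OF assms(1)] by simp
  then have "strict_mono_on {a..<a+b} (transpose y (Suc y) \<circ> \<sigma>)"
    using assms(3) by (intro strict_mono_on_transpose_Suc_comp[OF f(3)]) metis
  ultimately show ?thesis
    using permutes_compose[OF f(1) t] by (simp add: shuffles_def atLeast0LessThan)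
qed

text \<open>Unless \<open>S = {..<a}\<close>, some \<open>y \<notin> S\<close> has \<open>Suc y \<in> S\<close>; composing with the
  transposition of \<open>y\<close> and \<open>Suc y\<close> gives a shuffle with smaller \<open>\<Sum>S\<close> and opposite sign.\<close>

lemma sign_shuffle:
  assumes "\<sigma> \<in> shuffles a b"
  shows "sign \<sigma> = subset_sign a (\<sigma> ` {..<a})"
  using assms
proof (induction "\<Sum>(\<sigma> ` {..<a})" arbitrary: \<sigma> rule: less_induct)
  case less
  define S where "S = \<sigma> ` {..<a}"
  have S: "finite S" "card S = a"
    using shuffle_image_fst[OF less.prems] by (auto simp: S_def nsets_def)
  show ?case
  proof (cases "S = {..<a}")
    case True
    have "id \<in> shuffles a b" by (simp add: shuffles_def strict_mono_on_def permutes_id)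
    then have "\<sigma> = id"
      using inj_onD[OF inj_on_shuffle_image, where x=\<sigma> and y=id] less.prems True by (simp add: S_def)
    then show ?thesis
      using True by (simp add: S_def subset_sign_def flip: mult_2)
  next
    case False
    then obtain y where y: "y \<notin> S" "Suc y \<in> S"
      using down_closed_eq_lessThan_card[OF S(1)] S(2) by metis
    define t where "t = transpose y (Suc y)"
    have t\<sigma>: "t \<circ> \<sigma> \<in> shuffles a b"
      unfolding t_def using shuffle_transpose_Suc[OF less.prems] y by (simp add: S_def)
    have "\<Sum>(t ` S) < \<Sum>S"
      using sum_transpose_Suc_image[OF S(1) y] by (simp add: t_def)
    moreover have "(t \<circ> \<sigma>) ` {..<a} = t ` S" by (simp add: S_def image_comp)
    ultimately have "sign (t \<circ> \<sigma>) = subset_sign a (t ` S)"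
      using less.hyps[OF _ t\<sigma>] by (simp only: S_def[symmetric])
    also have "\<dots> = - subset_sign a S"
      unfolding t_def using subset_sign_transpose[OF S(1)] y by simp
    finally have "sign (t \<circ> \<sigma>) = - subset_sign a S" .
    moreover have "permutation \<sigma>"
      using shufflesD(1)[OF less.prems] by (auto simp: permutation_permutes)
    then have "sign (t \<circ> \<sigma>) = - sign \<sigma>"
      by (simp add: sign_compose t_def sign_swap_id permutation_swap_id)
    ultimately show ?thesis by (simp add: S_def)
  qed
qed

lemma sum_shuffles_eq_sum_nsets:
  assumes "length xs = a + b"
  shows "(\<Sum>\<sigma>\<in>shuffles a b. F (sign \<sigma>) (map (\<lambda>l. xs ! \<sigma> l) [0..<a]) (map (\<lambda>l. xs ! \<sigma> l) [a..<a+b]))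
       = (\<Sum>S\<in>nsets {..<a+b} a. F (subset_sign a S) (nths xs S) (nths xs (-S)))"
proof -
  have "F (sign \<sigma>) (map (\<lambda>l. xs ! \<sigma> l) [0..<a]) (map (\<lambda>l. xs ! \<sigma> l) [a..<a+b])
     = F (subset_sign a (\<sigma> ` {..<a})) (nths xs (\<sigma> ` {..<a})) (nths xs (- (\<sigma> ` {..<a})))"
    if s: "\<sigma> \<in> shuffles a b" for \<sigma>
  proof -
    note f = shufflesD[OF s]
    have lt: "\<forall>l\<in>{0..<0+a}. \<sigma> l < length xs" "\<forall>l\<in>{a..<a+b}. \<sigma> l < length xs"
      using permutes_in_image[OF f(1)] assms by auto
    have "map (\<lambda>l. xs ! \<sigma> l) [0..<a] = nths xs (\<sigma> ` {..<a})"
      using map_nth_strict_mono_on_eq_nths[OF f(2) lt(1)] by (simp add: atLeast0LessThan)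
    moreover have "map (\<lambda>l. xs ! \<sigma> l) [a..<a+b] = nths xs (- (\<sigma> ` {..<a}))"
      using map_nth_strict_mono_on_eq_nths[OF f(3) lt(2)] assms
      by (auto simp: shuffle_image_snd[OF s] intro: nths_cong)
    ultimately show ?thesis using sign_shuffle[OF s] by simp
  qed
  then show ?thesis
    using sum.reindex_bij_betw[OF bij_betw_shuffles_nsets,
        of "\<lambda>S. F (subset_sign a S) (nths xs S) (nths xs (-S))"]
    by simp
qed

section \<open>Shuffle sums under an adjacent transposition\<close>

definition shuffle_term :: "nat \<Rightarrow> ('x list \<Rightarrow> 'x list \<Rightarrow> 'r::comm_ring_1) \<Rightarrow> 'x list \<Rightarrow> nat set \<Rightarrow> 'r" where
  "shuffle_term a F xs S = of_int (subset_sign a S) * F (nths xs S) (nths xs (-S))"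

definition shuffle_sum :: "nat \<Rightarrow> ('x list \<Rightarrow> 'x list \<Rightarrow> 'r::comm_ring_1) \<Rightarrow> 'x list \<Rightarrow> 'r" where
  "shuffle_sum a F xs = (\<Sum>S\<in>nsets {..<length xs} a. shuffle_term a F xs S)"

lemma shuffle_sum_add:
  "shuffle_sum a (\<lambda>X Y. F X Y + G X Y) xs = shuffle_sum a F xs + shuffle_sum a G xs"
  unfolding shuffle_sum_def shuffle_term_def by (simp add: sum.distrib distrib_left)

lemma shuffle_sum_minus:
  "shuffle_sum a (\<lambda>X Y. - F X Y) xs = - shuffle_sum a F xs"
  unfolding shuffle_sum_def shuffle_term_def by (simp add: sum_negf)

lemma shuffle_sum_cong:
  assumes "\<And>X Y. length X = a \<Longrightarrow> length Y = length xs - a \<Longrightarrow> F X Y = G X Y"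
  shows "shuffle_sum a F xs = shuffle_sum a G xs"
  unfolding shuffle_sum_def shuffle_term_def
  by (intro sum.cong refl) (simp add: assms length_nths_nsets)

lemma shuffle_sum_zero: "shuffle_sum a (\<lambda>X Y. 0) xs = 0"
  unfolding shuffle_sum_def shuffle_term_def by simp

text \<open>For \<open>length L = j\<close>, \<open>open_gap j\<close> sends the positions of \<open>L @ R\<close> to those of
  \<open>L @ [u, v] @ R\<close>, skipping \<open>j\<close> and \<open>j + 1\<close>.\<close>

definition open_gap :: "nat \<Rightarrow> nat \<Rightarrow> nat" where
  "open_gap j x = (if x < j then x else x + 2)"

lemma inj_open_gap: "inj (open_gap j)"
  by (rule injI) (auto simp: open_gap_def split: if_splits)

lemma open_gap_vimage_image [simp]: "open_gap j -` open_gap j ` S = S"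
  by (rule inj_vimage_image_eq[OF inj_open_gap])

lemma open_gap_image_vimage: "open_gap j ` (open_gap j -` S) = S - {j, Suc j}"
proof -
  have "x \<in> range (open_gap j)" if "x \<noteq> j" "x \<noteq> Suc j" for x
    using that by (cases "x < j") (auto simp: open_gap_def image_iff intro!: exI[of _ "x - 2"])
  moreover have "j \<notin> range (open_gap j)" "Suc j \<notin> range (open_gap j)"
    by (auto simp: open_gap_def)
  ultimately have "range (open_gap j) = - {j, Suc j}" by blast
  then show ?thesis by (simp add: image_vimage_eq Diff_eq)
qed

lemma card_open_gap_image: "card (open_gap j ` S) = card S"
  by (rule card_image[OF inj_on_subset[OF inj_open_gap]]) simp

lemma open_gap_image_not_in: "j \<notin> open_gap j ` S" "Suc j \<notin> open_gap j ` S"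
  by (auto simp: open_gap_def)

lemma sum_open_gap_image:
  assumes "finite S"
  shows "\<Sum>(open_gap j ` S) = \<Sum>S + 2 * card {x\<in>S. j \<le> x}"
proof -
  have "\<Sum>(open_gap j ` S) = (\<Sum>x\<in>S. x + (if j \<le> x then 2 else 0))"
    by (simp add: sum.reindex[OF inj_on_subset[OF inj_open_gap]])
      (auto intro: sum.cong simp: open_gap_def)
  also have "\<dots> = \<Sum>S + 2 * card {x\<in>S. j \<le> x}"
    using sum.inter_filter[OF assms, of "\<lambda>_. 2::nat" "\<lambda>x. j \<le> x"] by (simp add: sum.distrib)
  finally show ?thesis .
qed

lemma subset_sign_open_gap_image:
  "finite S \<Longrightarrow> subset_sign a (open_gap j ` S) = subset_sign a S"
  by (simp add: subset_sign_def sum_open_gap_image power_add power_mult)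

lemma subset_sign_insert_pair_open_gap_image:
  assumes "finite S"
  shows "subset_sign (a+2) (insert j (insert (Suc j) (open_gap j ` S))) = subset_sign a S"
proof -
  have "\<Sum>(insert j (insert (Suc j) (open_gap j ` S))) + \<Sum>{..<a+2}
     = (\<Sum>S + \<Sum>{..<a}) + 2 * (j + card {x\<in>S. j \<le> x} + a + 1)"
    using assms by (simp add: open_gap_image_not_in sum_open_gap_image numeral_2_eq_2)
  then show ?thesis unfolding subset_sign_def by (simp add: power_add power_mult)
qed

lemma nths_vimage_open_gap:
  assumes "length L = j" "length M = 2" "j \<notin> U" "Suc j \<notin> U"
  shows "nths (L @ M @ R) U = nths (L @ R) (open_gap j -` U)"
proof -
  have "nths M {i. i + j \<in> U} = []"
    using assms(2-4) by (subst nths_cong[where B="{}"]) (auto simp: numeral_2_eq_2 less_Suc_eq)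
  moreover have "nths L (open_gap j -` U) = nths L U"
    using assms(1) by (intro nths_cong) (simp add: open_gap_def)
  moreover have "{i. i + j \<in> open_gap j -` U} = {i. i + j + 2 \<in> U}"
    by (auto simp: open_gap_def)
  ultimately show ?thesis
    using assms(1,2) by (simp add: nths_append3 nths_append)
qed

lemma nths_insert_pair:
  assumes "length L = j" "j \<in> U" "Suc j \<in> U"
  shows "nths (L @ [u,v] @ R) U = nths L U @ [u,v] @ nths R {i. i + j + 2 \<in> U}"
    and "nths (L @ R) (open_gap j -` U) = nths L U @ nths R {i. i + j + 2 \<in> U}"
proof -
  show "nths (L @ [u,v] @ R) U = nths L U @ [u,v] @ nths R {i. i + j + 2 \<in> U}"
    using assms by (subst nths_append3) (simp add: nths_Cons)
  have "nths L (open_gap j -` U) = nths L U"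
    using assms(1) by (intro nths_cong) (simp add: open_gap_def)
  moreover have "{i. i + j \<in> open_gap j -` U} = {i. i + j + 2 \<in> U}"
    by (auto simp: open_gap_def)
  ultimately show "nths (L @ R) (open_gap j -` U) = nths L U @ nths R {i. i + j + 2 \<in> U}"
    using assms(1) by (simp add: nths_append)
qed

lemma nths_transpose_pair:
  assumes "length L = j" "(j \<in> U) \<noteq> (Suc j \<in> U)"
  shows "nths (L @ [v,u] @ R) U = nths (L @ [u,v] @ R) (transpose j (Suc j) ` U)"
proof -
  let ?U = "transpose j (Suc j) ` U"
  have "nths L ?U = nths L U"
    using assms(1) by (intro nths_cong) (simp only: in_transpose_image_iff, simp)
  moreover have "{i. i + j + 2 \<in> ?U} = {i. i + j + 2 \<in> U}"
    by (auto simp: in_transpose_image_iff transpose_def)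
  moreover have "nths [v,u] {i. i + j \<in> U} = nths [u,v] {i. i + j \<in> ?U}"
    using assms(2) by (auto simp: nths_Cons in_transpose_image_iff)
  ultimately show ?thesis
    using assms(1) by (simp only: nths_append3) simp
qed

lemma sum_shuffle_term_swap_separated:
  assumes "length L = j"
  shows "(\<Sum>S | S \<in> nsets {..<length L + 2 + length R} a \<and> (j \<in> S) \<noteq> (Suc j \<in> S).
      shuffle_term a F (L@[v,u]@R) S)
    = - (\<Sum>S | S \<in> nsets {..<length L + 2 + length R} a \<and> (j \<in> S) \<noteq> (Suc j \<in> S).
      shuffle_term a F (L@[u,v]@R) S)"
proof -
  define C where "C = {S. S \<in> nsets {..<length L + 2 + length R} a \<and> (j \<in> S) \<noteq> (Suc j \<in> S)}"
  let ?t = "transpose j (Suc j)"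
  have swap: "shuffle_term a F (L@[v,u]@R) S = - shuffle_term a F (L@[u,v]@R) (?t ` S)"
    if "S \<in> C" for S
  proof -
    have S: "finite S" "(j \<in> S) \<noteq> (Suc j \<in> S)" using that by (auto simp: C_def nsets_def)
    have "nths (L@[v,u]@R) (-S) = nths (L@[u,v]@R) (- (?t ` S))"
      using nths_transpose_pair[OF assms(1), of "-S" v u R] S(2) by (simp add: bij_image_Compl_eq)
    then show ?thesis
      using nths_transpose_pair[OF assms(1) S(2), of v u R] subset_sign_transpose[OF S]
      by (simp add: shuffle_term_def)
  qed
  have closed: "?t ` S \<in> C" if "S \<in> C" for S
  proof -
    have S: "S \<subseteq> {..<length L + 2 + length R}" "finite S" "card S = a" "(j \<in> S) \<noteq> (Suc j \<in> S)"
      using that by (auto simp: C_def nsets_def)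
    have "?t ` S \<subseteq> {..<length L + 2 + length R}"
      using S(1) assms(1) by (auto simp: transpose_def)
    moreover have "card (?t ` S) = a"
      using S(3) by (simp add: card_image)
    ultimately show ?thesis
      using S(2,4) by (simp add: C_def nsets_def in_transpose_image_iff)
  qed
  have invol: "?t ` ?t ` S = S" for S :: "nat set"
    by (simp add: image_comp)
  have "(\<Sum>S\<in>C. shuffle_term a F (L@[v,u]@R) S) = - (\<Sum>S\<in>C. shuffle_term a F (L@[u,v]@R) (?t ` S))"
    unfolding sum_negf[symmetric] by (rule sum.cong[OF refl]) (rule swap)
  also have "(\<Sum>S\<in>C. shuffle_term a F (L@[u,v]@R) (?t ` S)) = (\<Sum>S\<in>C. shuffle_term a F (L@[u,v]@R) S)"
    by (rule sum.reindex_bij_witness[where i="image ?t" and j="image ?t"])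
      (simp_all only: invol closed)
  finally show ?thesis
    unfolding C_def .
qed

lemma open_gap_vimage_insert_pair [simp]:
  "open_gap j -` insert j (insert (Suc j) S) = open_gap j -` S"
  by (auto simp: open_gap_def split: if_splits)

lemma open_gap_vimage_lessThan:
  "S \<subseteq> {..<N} \<Longrightarrow> Suc j < N \<Longrightarrow> open_gap j -` S \<subseteq> {..<N - 2}"
  by (auto simp: open_gap_def split: if_splits)

lemma open_gap_vimage_in_nsets:
  assumes "S \<in> nsets {..<N} a" "Suc j < N"
  shows "open_gap j -` S \<in> nsets {..<N - 2} (card (S - {j, Suc j}))"
proof -
  have "S \<subseteq> {..<N}" using assms(1) by (auto simp: nsets_def)
  then have "open_gap j -` S \<subseteq> {..<N - 2}" using assms(2) by (rule open_gap_vimage_lessThan)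
  moreover have "card (S - {j, Suc j}) = card (open_gap j -` S)"
    using card_open_gap_image[of j "open_gap j -` S"] unfolding open_gap_image_vimage .
  ultimately show ?thesis by (simp add: nsets_def finite_subset)
qed

lemma open_gap_image_in_nsets:
  assumes "S \<in> nsets {..<N - 2} a" "Suc j < N"
  shows "open_gap j ` S \<in> nsets {..<N} a"
proof -
  have "open_gap j ` S \<subseteq> {..<N}" using assms by (auto simp: nsets_def open_gap_def)
  then show ?thesis using assms(1) card_open_gap_image[of j S] by (simp add: nsets_def)
qed

lemma shuffle_term_swap_inside:
  assumes j: "length L = j" and len: "length L + 2 + length R = a + b"
    and S: "S \<in> nsets {..<length L + 2 + length R} a" "j \<in> S" "Suc j \<in> S"
    and H: "\<And>P Q Y. length P + 2 + length Q = a \<Longrightarrow> length Y = b \<Longrightarrow>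
      F (P@[u,v]@Q) Y + F (P@[v,u]@Q) Y = G (P@Q) Y"
  shows "shuffle_term a F (L@[u,v]@R) S + shuffle_term a F (L@[v,u]@R) S
    = shuffle_term (a - 2) G (L@R) (open_gap j -` S)"
proof -
  let ?S = "open_gap j -` S"
  have S': "S \<in> nsets {..<length (L@[w,w']@R)} a" for w w' using S(1) by simp
  have fin: "finite ?S"
    using open_gap_vimage_in_nsets[OF S(1)] j by (simp add: nsets_def)
  define P where "P = nths L S"
  define Q where "Q = nths R {i. i + j + 2 \<in> S}"
  have X: "nths (L@[u,v]@R) S = P @ [u,v] @ Q" "nths (L@[v,u]@R) S = P @ [v,u] @ Q"
    "nths (L@R) ?S = P @ Q"
    using nths_insert_pair[OF j S(2,3)] by (simp_all add: P_def Q_def)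
  have Y: "nths (L@[w,w']@R) (-S) = nths (L@R) (- ?S)" for w w'
    using nths_vimage_open_gap[OF j, of "[w,w']" "-S"] S(2,3) by (simp add: vimage_Compl)
  have lenX: "length (P @ [u,v] @ Q) = a"
    using length_nths_nsets(1)[OF S'[of u v]] unfolding X(1) .
  have lenY: "length (nths (L@R) (- ?S)) = b"
    using length_nths_nsets(2)[OF S'[of u v]] len unfolding Y by simp
  have "F (P@[u,v]@Q) (nths (L@R) (- ?S)) + F (P@[v,u]@Q) (nths (L@R) (- ?S))
      = G (P@Q) (nths (L@R) (- ?S))"
    using H[of P Q "nths (L@R) (- ?S)"] lenX lenY by simp
  moreover have "subset_sign a S = subset_sign (a - 2) ?S"
  proof -
    have "insert j (insert (Suc j) (open_gap j ` ?S)) = S"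
      unfolding open_gap_image_vimage using S(2,3) by auto
    moreover have "a - 2 + 2 = a" using lenX by simp
    ultimately show ?thesis using subset_sign_insert_pair_open_gap_image[OF fin, of "a - 2" j] by simp
  qed
  ultimately show ?thesis
    unfolding shuffle_term_def X Y by (simp add: distrib_left[symmetric])
qed

lemma shuffle_term_swap_outside:
  assumes j: "length L = j" and len: "length L + 2 + length R = a + b"
    and S: "S \<in> nsets {..<length L + 2 + length R} a" "j \<notin> S" "Suc j \<notin> S"
    and H: "\<And>X P Q. length X = a \<Longrightarrow> length P + 2 + length Q = b \<Longrightarrow>
      F X (P@[u,v]@Q) + F X (P@[v,u]@Q) = G X (P@Q)"
  shows "shuffle_term a F (L@[u,v]@R) S + shuffle_term a F (L@[v,u]@R) S
    = shuffle_term a G (L@R) (open_gap j -` S)"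
proof -
  let ?S = "open_gap j -` S"
  have S': "S \<in> nsets {..<length (L@[w,w']@R)} a" for w w' using S(1) by simp
  have fin: "finite ?S"
    using open_gap_vimage_in_nsets[OF S(1)] j by (simp add: nsets_def)
  have "j \<in> -S" "Suc j \<in> -S" using S(2,3) by auto
  note pair = nths_insert_pair[OF j this]
  define P where "P = nths L (-S)"
  define Q where "Q = nths R {i. i + j + 2 \<in> -S}"
  have Y: "nths (L@[u,v]@R) (-S) = P @ [u,v] @ Q" "nths (L@[v,u]@R) (-S) = P @ [v,u] @ Q"
    "nths (L@R) (- ?S) = P @ Q"
    using pair by (simp_all add: P_def Q_def vimage_Compl)
  have X: "nths (L@[w,w']@R) S = nths (L@R) ?S" for w w'
    using nths_vimage_open_gap[OF j, of "[w,w']" S] S(2,3) by simp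
  have lenX: "length (nths (L@R) ?S) = a"
    using length_nths_nsets(1)[OF S'[of u v]] unfolding X .
  have lenY: "length (P @ [u,v] @ Q) = b"
    using length_nths_nsets(2)[OF S'[of u v]] len unfolding Y(1) by simp
  have "F (nths (L@R) ?S) (P@[u,v]@Q) + F (nths (L@R) ?S) (P@[v,u]@Q)
      = G (nths (L@R) ?S) (P@Q)"
    using H[of "nths (L@R) ?S" P Q] lenX lenY by simp
  moreover have "subset_sign a S = subset_sign a ?S"
  proof -
    have "open_gap j ` ?S = S"
      unfolding open_gap_image_vimage using S(2,3) by auto
    then show ?thesis using subset_sign_open_gap_image[OF fin, of a j] by simp
  qed
  ultimately show ?thesis
    unfolding shuffle_term_def X Y by (simp add: distrib_left[symmetric])
qed

lemma sum_shuffle_term_swap_inside: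
  assumes j: "length L = j" and len: "length L + 2 + length R = a + b" and a: "2 \<le> a"
    and H: "\<And>P Q Y. length P + 2 + length Q = a \<Longrightarrow> length Y = b \<Longrightarrow>
      F (P@[u,v]@Q) Y + F (P@[v,u]@Q) Y = G (P@Q) Y"
  shows "(\<Sum>S | S \<in> nsets {..<length L + 2 + length R} a \<and> j \<in> S \<and> Suc j \<in> S.
      shuffle_term a F (L@[u,v]@R) S + shuffle_term a F (L@[v,u]@R) S) = shuffle_sum (a - 2) G (L@R)"
  unfolding shuffle_sum_def
proof (rule sum.reindex_bij_witness[where j="vimage (open_gap j)"
      and i="\<lambda>S. insert j (insert (Suc j) (open_gap j ` S))"])
  have Suc_j: "Suc j < length L + 2 + length R" using j by simp
  fix S assume "S \<in> {S. S \<in> nsets {..<length L + 2 + length R} a \<and> j \<in> S \<and> Suc j \<in> S}"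
  then have S: "S \<in> nsets {..<length L + 2 + length R} a" "j \<in> S" "Suc j \<in> S" by auto
  show "insert j (insert (Suc j) (open_gap j ` (open_gap j -` S))) = S"
    unfolding open_gap_image_vimage using S(2,3) by auto
  have "card (S - {j, Suc j}) = a - 2" using S by (auto simp: nsets_def card_Diff_subset)
  then show "open_gap j -` S \<in> nsets {..<length (L@R)} (a - 2)"
    using open_gap_vimage_in_nsets[OF S(1) Suc_j] by simp
  show "shuffle_term (a - 2) G (L@R) (open_gap j -` S)
      = shuffle_term a F (L@[u,v]@R) S + shuffle_term a F (L@[v,u]@R) S"
    using shuffle_term_swap_inside[where F=F and G=G, OF j len S H] by simp
next
  fix S assume S: "S \<in> nsets {..<length (L@R)} (a - 2)"
  moreover have "length (L@R) = length L + 2 + length R - 2" by simp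
  ultimately have "open_gap j ` S \<in> nsets {..<length L + 2 + length R} (a - 2)"
    using open_gap_image_in_nsets[of S "length L + 2 + length R" "a - 2" j] j by simp
  with a show "insert j (insert (Suc j) (open_gap j ` S))
      \<in> {S. S \<in> nsets {..<length L + 2 + length R} a \<and> j \<in> S \<and> Suc j \<in> S}"
    using j by (auto simp: nsets_def open_gap_image_not_in)
qed simp

lemma sum_shuffle_term_swap_outside:
  assumes j: "length L = j" and len: "length L + 2 + length R = a + b"
    and H: "\<And>X P Q. length X = a \<Longrightarrow> length P + 2 + length Q = b \<Longrightarrow>
      F X (P@[u,v]@Q) + F X (P@[v,u]@Q) = G X (P@Q)"
  shows "(\<Sum>S | S \<in> nsets {..<length L + 2 + length R} a \<and> j \<notin> S \<and> Suc j \<notin> S.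
      shuffle_term a F (L@[u,v]@R) S + shuffle_term a F (L@[v,u]@R) S) = shuffle_sum a G (L@R)"
  unfolding shuffle_sum_def
proof (rule sum.reindex_bij_witness[where j="vimage (open_gap j)" and i="image (open_gap j)"])
  have Suc_j: "Suc j < length L + 2 + length R" using j by simp
  fix S assume "S \<in> {S. S \<in> nsets {..<length L + 2 + length R} a \<and> j \<notin> S \<and> Suc j \<notin> S}"
  then have S: "S \<in> nsets {..<length L + 2 + length R} a" "j \<notin> S" "Suc j \<notin> S" by auto
  show "open_gap j ` (open_gap j -` S) = S"
    unfolding open_gap_image_vimage using S(2,3) by auto
  have "card (S - {j, Suc j}) = a" using S by (auto simp: nsets_def)
  then show "open_gap j -` S \<in> nsets {..<length (L@R)} a"
    using open_gap_vimage_in_nsets[OF S(1) Suc_j] by simp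
  show "shuffle_term a G (L@R) (open_gap j -` S)
      = shuffle_term a F (L@[u,v]@R) S + shuffle_term a F (L@[v,u]@R) S"
    using shuffle_term_swap_outside[where F=F and G=G, OF j len S H] by simp
next
  fix S assume "S \<in> nsets {..<length (L@R)} a"
  moreover have "length (L@R) = length L + 2 + length R - 2" by simp
  ultimately show "open_gap j ` S
      \<in> {S. S \<in> nsets {..<length L + 2 + length R} a \<and> j \<notin> S \<and> Suc j \<notin> S}"
    using open_gap_image_in_nsets[of S "length L + 2 + length R" a j] j
    by (simp add: open_gap_image_not_in)
qed simp

lemma nsets_containing_pair_empty:
  assumes "a < 2"
  shows "{S. S \<in> nsets A a \<and> j \<in> S \<and> Suc j \<in> S} = {}"
proof (rule ccontr)
  assume "{S. S \<in> nsets A a \<and> j \<in> S \<and> Suc j \<in> S} \<noteq> {}"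
  then obtain S where S: "S \<in> nsets A a" "j \<in> S" "Suc j \<in> S" by blast
  then have "card {j, Suc j} \<le> card S" by (intro card_mono) (auto simp: nsets_def)
  then show False using S(1) assms by (simp add: nsets_def)
qed

lemma nsets_avoiding_pair_empty:
  assumes "N < a + 2" "Suc j < N"
  shows "{S. S \<in> nsets {..<N} a \<and> j \<notin> S \<and> Suc j \<notin> S} = {}"
proof (rule ccontr)
  assume "{S. S \<in> nsets {..<N} a \<and> j \<notin> S \<and> Suc j \<notin> S} \<noteq> {}"
  then obtain S where S: "S \<in> nsets {..<N} a" "j \<notin> S" "Suc j \<notin> S" by blast
  then have "{j, Suc j} \<subseteq> {..<N} - S" using assms(2) by auto
  then have "card {j, Suc j} \<le> card ({..<N} - S)" by (intro card_mono) simp_all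
  then show False using nsets_lessThan_Diff[OF S(1)] assms(1) by (simp add: nsets_def)
qed

lemma shuffle_sum_swap:
  fixes F :: "'x list \<Rightarrow> 'x list \<Rightarrow> 'r::comm_ring_1"
  assumes len: "length L + 2 + length R = a + b"
    and HA: "\<And>P Q Y. length P + 2 + length Q = a \<Longrightarrow> length Y = b \<Longrightarrow>
      F (P@[u,v]@Q) Y + F (P@[v,u]@Q) Y = G1 (P@Q) Y"
    and HB: "\<And>X P Q. length X = a \<Longrightarrow> length P + 2 + length Q = b \<Longrightarrow>
      F X (P@[u,v]@Q) + F X (P@[v,u]@Q) = G2 X (P@Q)"
  shows "shuffle_sum a F (L@[u,v]@R) + shuffle_sum a F (L@[v,u]@R) =
     (if 2 \<le> a then shuffle_sum (a-2) G1 (L@R) else 0) + (if 2 \<le> b then shuffle_sum a G2 (L@R) else 0)"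
proof -
  define N where "N = length L + 2 + length R"
  define j where "j = length L"
  define A where "A = {S. S \<in> nsets {..<N} a \<and> j \<in> S \<and> Suc j \<in> S}"
  define B where "B = {S. S \<in> nsets {..<N} a \<and> j \<notin> S \<and> Suc j \<notin> S}"
  define C where "C = {S. S \<in> nsets {..<N} a \<and> (j \<in> S) \<noteq> (Suc j \<in> S)}"
  let ?T = "shuffle_term a F (L@[u,v]@R)" and ?T' = "shuffle_term a F (L@[v,u]@R)"
  have split: "sum f (nsets {..<N} a) = sum f A + sum f B + sum f C" for f :: "nat set \<Rightarrow> 'r"
  proof -
    have "nsets {..<N} a = A \<union> (B \<union> C)" "A \<inter> (B \<union> C) = {}" "B \<inter> C = {}"
      unfolding A_def B_def C_def by auto
    moreover have "finite A" "finite B" "finite C" unfolding A_def B_def C_def by auto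
    ultimately show ?thesis by (simp add: sum.union_disjoint add.assoc)
  qed
  have in_A: "(\<Sum>S\<in>A. ?T S + ?T' S) = (if 2 \<le> a then shuffle_sum (a-2) G1 (L@R) else 0)"
  proof (cases "2 \<le> a")
    case True
    then show ?thesis unfolding A_def N_def j_def
      using sum_shuffle_term_swap_inside[where F=F and G=G1, OF refl len True HA] by simp
  next
    case False
    then have "A = {}" unfolding A_def by (intro nsets_containing_pair_empty) simp
    then show ?thesis using False by simp
  qed
  have in_B: "(\<Sum>S\<in>B. ?T S + ?T' S) = (if 2 \<le> b then shuffle_sum a G2 (L@R) else 0)"
  proof (cases "2 \<le> b")
    case True
    then show ?thesis unfolding B_def N_def j_def
      using sum_shuffle_term_swap_outside[where F=F and G=G2, OF refl len HB] by simp
  next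
    case False
    then have "B = {}" unfolding B_def using len
      by (intro nsets_avoiding_pair_empty) (simp_all add: N_def j_def)
    then show ?thesis using False by simp
  qed
  have in_C: "sum ?T' C = - sum ?T C"
    unfolding C_def N_def j_def by (rule sum_shuffle_term_swap_separated[OF refl])
  have "length (L@[w,w']@R) = N" for w w' :: 'x by (simp add: N_def)
  then have "shuffle_sum a F (L@[u,v]@R) + shuffle_sum a F (L@[v,u]@R)
      = (sum ?T A + sum ?T' A) + (sum ?T B + sum ?T' B) + (sum ?T C + sum ?T' C)"
    unfolding shuffle_sum_def by (simp only: split ac_simps)
  also have "\<dots> = (if 2 \<le> a then shuffle_sum (a-2) G1 (L@R) else 0) +
      (if 2 \<le> b then shuffle_sum a G2 (L@R) else 0)"
    using in_A in_B in_C by (simp add: sum.distrib)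
  finally show ?thesis .
qed

section \<open>Symmetric products in the 1-form arguments\<close>

definition forms_product :: "nat \<Rightarrow> ('o list \<Rightarrow> 'r::comm_ring_1) \<Rightarrow> ('o list \<Rightarrow> 'r) \<Rightarrow> 'o list \<Rightarrow> 'r" where
  "forms_product i f g as = (\<Sum>T\<in>nsets {..<length as} i. f (nths as T) * g (nths as (-T)))"

lemma forms_product_add_left:
  "forms_product i f g as + forms_product i f' g as = forms_product i (\<lambda>Z. f Z + f' Z) g as"
  unfolding forms_product_def by (simp add: sum.distrib distrib_right)

lemma forms_product_add_right:
  "forms_product i f g as + forms_product i f g' as = forms_product i f (\<lambda>Z. g Z + g' Z) as"
  unfolding forms_product_def by (simp add: sum.distrib distrib_left)

lemma forms_product_minus_left: "forms_product i (\<lambda>Z. - f Z) g as = - forms_product i f g as"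
  unfolding forms_product_def by (simp add: sum_negf)

lemma forms_product_minus_right: "forms_product i f (\<lambda>Z. - g Z) as = - forms_product i f g as"
  unfolding forms_product_def by (simp add: sum_negf)

lemma forms_product_cong:
  assumes "\<And>Z. length Z = i \<Longrightarrow> f Z = f' Z" "\<And>Z. length Z = length as - i \<Longrightarrow> g Z = g' Z"
  shows "forms_product i f g as = forms_product i f' g' as"
  unfolding forms_product_def
  by (intro sum.cong refl arg_cong2[where f=times] assms length_nths_nsets) auto

lemma forms_product_eq_0: "length as < i \<Longrightarrow> forms_product i f g as = 0"
  unfolding forms_product_def by (simp add: nsets_eq_empty)

lemma mset_nths_permute_list:
  assumes "\<pi> permutes {..<length as}"
  shows "mset (nths (permute_list \<pi> as) U) = mset (nths as (\<pi> ` U))"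
proof -
  define n where "n = length as"
  have inj: "inj \<pi>" using assms permutes_inj by blast
  have "nths (permute_list \<pi> as) U = map (nth as) (map \<pi> (nths [0..<n] U))"
    unfolding permute_list_def n_def by (simp add: nths_map comp_def)
  moreover have "nths as (\<pi> ` U) = map (nth as) (nths [0..<n] (\<pi> ` U))"
    unfolding n_def by (metis map_nth nths_map)
  moreover have "mset (map \<pi> (nths [0..<n] U)) = mset (nths [0..<n] (\<pi> ` U))"
  proof (rule iffD1[OF set_eq_iff_mset_eq_distinct])
    show "distinct (map \<pi> (nths [0..<n] U))" "distinct (nths [0..<n] (\<pi> ` U))"
      using inj by (auto simp: distinct_map inj_on_subset[OF inj])
    have "set (nths [0..<n] V) = {i. i < n \<and> i \<in> V}" for V
    proof -
      have "set (nths [0..<n] V) = {[0..<n] ! i | i. i < n \<and> i \<in> V}" by (simp add: set_nths)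
      also have "\<dots> = {i. i < n \<and> i \<in> V}" by force
      finally show ?thesis .
    qed
    moreover have "\<pi> ` {i. i < n \<and> i \<in> U} = {i. i < n \<and> i \<in> \<pi> ` U}"
      using permutes_in_image[OF assms] inj unfolding n_def by (auto simp: inj_image_mem_iff)
    ultimately show "set (map \<pi> (nths [0..<n] U)) = set (nths [0..<n] (\<pi> ` U))" by simp
  qed
  ultimately show ?thesis by (metis mset_map)
qed

lemma forms_product_mset_eq:
  assumes m: "mset as' = mset as"
    and f: "\<And>Z Z'. length Z = i \<Longrightarrow> mset Z' = mset Z \<Longrightarrow> f Z' = f Z"
    and g: "\<And>Z Z'. length Z = length as - i \<Longrightarrow> mset Z' = mset Z \<Longrightarrow> g Z' = g Z"
  shows "forms_product i f g as' = forms_product i f g as"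
proof -
  obtain \<pi> where \<pi>: "\<pi> permutes {..<length as}" "permute_list \<pi> as = as'"
    by (rule mset_eq_permutation[OF m])
  have len: "length as' = length as" using mset_eq_length[OF m] .
  have bij: "bij \<pi>" using \<pi>(1) by (rule permutes_bij)
  have image: "h ` T \<in> nsets {..<length as} i"
    if T: "T \<in> nsets {..<length as} i" and h: "h permutes {..<length as}" for T h
  proof -
    have T': "T \<subseteq> {..<length as}" "finite T" "card T = i" using T by (auto simp: nsets_def)
    then have "h ` T \<subseteq> {..<length as}" using image_mono[OF T'(1), of h] permutes_image[OF h] by simp
    then show ?thesis using T' permutes_inj_on[OF h] by (simp add: nsets_def card_image)
  qed
  have "forms_product i f g as'
      = (\<Sum>T\<in>nsets {..<length as} i. f (nths as (\<pi> ` T)) * g (nths as (- (\<pi> ` T))))"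
    unfolding forms_product_def len
  proof (rule sum.cong[OF refl])
    fix T assume T: "T \<in> nsets {..<length as} i"
    note lens = length_nths_nsets[OF image[OF T \<pi>(1)]]
    have "f (nths as' T) = f (nths as (\<pi> ` T))"
      by (rule f[OF lens(1)]) (use mset_nths_permute_list[OF \<pi>(1), of T] \<pi>(2) in simp)
    moreover have "g (nths as' (-T)) = g (nths as (- (\<pi> ` T)))"
      by (rule g[OF lens(2)])
        (use mset_nths_permute_list[OF \<pi>(1), of "-T"] \<pi>(2) bij_image_Compl_eq[OF bij] in simp)
    ultimately show "f (nths as' T) * g (nths as' (-T))
        = f (nths as (\<pi> ` T)) * g (nths as (- (\<pi> ` T)))"
      by simp
  qed
  also have "\<dots> = forms_product i f g as"
    unfolding forms_product_def
  proof (rule sum.reindex_bij_witness[where i="image (inv \<pi>)" and j="image \<pi>"])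
    fix T assume T: "T \<in> nsets {..<length as} i"
    show "\<pi> ` T \<in> nsets {..<length as} i" by (rule image[OF T \<pi>(1)])
    show "inv \<pi> ` T \<in> nsets {..<length as} i" by (rule image[OF T permutes_inv[OF \<pi>(1)]])
    show "inv \<pi> ` \<pi> ` T = T" by (rule image_inv_f_f[OF bij_is_inj[OF bij]])
    show "\<pi> ` inv \<pi> ` T = T" by (rule image_f_inv_f[OF bij_is_surj[OF bij]])
  qed simp
  finally show ?thesis .
qed

lemma forms_product_0_Cons:
  "forms_product 0 f g (x # as) = forms_product 0 f (\<lambda>Z. g (x # Z)) as"
proof -
  have "nsets {..<Suc (length as)} 0 = {{}}" "nsets {..<length as} 0 = {{}}"
    by (auto simp: nsets_def)
  then show ?thesis by (simp add: forms_product_def nths_Cons_vimage)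
qed

lemma forms_product_Suc_Cons:
  "forms_product (Suc i) f g (x # as) =
     forms_product i (\<lambda>Z. f (x # Z)) g as + forms_product (Suc i) f (\<lambda>Z. g (x # Z)) as"
  unfolding forms_product_def length_Cons
  by (subst sum_nsets_split[where P="\<lambda>T. 0 \<in> T"],
      simp only: sum_nsets_Suc_with_0 sum_nsets_Suc_without_0)
    (simp add: nths_Cons_vimage vimage_Compl vimage_Suc_insert_0 inj_vimage_image_eq[OF inj_Suc])

definition lincomb_closed :: "(('x \<Rightarrow> 'r::comm_ring_1) \<Rightarrow> bool) \<Rightarrow> bool" where
  "lincomb_closed P \<longleftrightarrow>
     P (\<lambda>x. 0) \<and> (\<forall>F G. P F \<longrightarrow> P G \<longrightarrow> P (\<lambda>x. F x + G x)) \<and> (\<forall>F c. P F \<longrightarrow> P (\<lambda>x. c * F x))"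

lemma lincomb_closed_mult_left: "lincomb_closed P \<Longrightarrow> P F \<Longrightarrow> P (\<lambda>x. c * F x)"
  unfolding lincomb_closed_def by blast

lemma lincomb_closed_mult_right: "lincomb_closed P \<Longrightarrow> P F \<Longrightarrow> P (\<lambda>x. F x * c)"
  using lincomb_closed_mult_left[of P F c] by (simp add: mult.commute)

lemma lincomb_closed_sum:
  assumes "lincomb_closed P" "finite A" "\<And>a. a \<in> A \<Longrightarrow> P (f a)"
  shows "P (\<lambda>x. \<Sum>a\<in>A. f a x)"
  using assms(2,3)
proof (induction A rule: finite_induct)
  case empty
  then show ?case using assms(1) by (simp add: lincomb_closed_def)
next
  case (insert a A)
  then have "P (\<lambda>x. f a x + (\<Sum>a\<in>A. f a x))" using assms(1) unfolding lincomb_closed_def by blast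
  then show ?case using insert by simp
qed

lemma has_order_zero: "has_order sc s (\<lambda>x. 0)"
  by (induction s) auto

lemma has_order_add:
  "has_order sc s F \<Longrightarrow> has_order sc s G \<Longrightarrow> has_order sc s (\<lambda>x. F x + G x)"
proof (induction s arbitrary: F G)
  case (Suc s)
  have "has_order sc s (\<lambda>x. (F (sc f x) - f * F x) + (G (sc f x) - f * G x))" for f
    using Suc by simp
  then show ?case by (simp add: algebra_simps)
qed (simp add: algebra_simps)

lemma has_order_mult_left: "has_order sc s F \<Longrightarrow> has_order sc s (\<lambda>x. c * F x)"
proof (induction s arbitrary: F)
  case (Suc s)
  have "has_order sc s (\<lambda>x. c * (F (sc f x) - f * F x))" for f
    using Suc by simp
  then show ?case by (simp add: algebra_simps)
qed (simp add: algebra_simps)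

lemma lincomb_closed_has_order: "lincomb_closed (has_order sc s)"
  unfolding lincomb_closed_def using has_order_zero has_order_add has_order_mult_left by blast

lemma has_order_mono: "has_order sc s F \<Longrightarrow> s \<le> s' \<Longrightarrow> has_order sc s' F"
proof (induction s' arbitrary: s F)
  case (Suc s')
  show ?case
  proof (cases s)
    case 0
    then show ?thesis using Suc.prems by (simp add: has_order_zero)
  next
    case (Suc s0)
    then show ?thesis using Suc.prems Suc.IH[of s0] by auto
  qed
qed simp

definition real_linear_wrt ::
  "('r::{comm_ring_1,real_algebra_1} \<Rightarrow> 'x::ab_group_add \<Rightarrow> 'x) \<Rightarrow> ('x \<Rightarrow> 'r) \<Rightarrow> bool" where
  "real_linear_wrt sc F \<longleftrightarrow>
     (\<forall>x y. F (x + y) = F x + F y) \<and> (\<forall>c x. F (sc (of_real c) x) = of_real c * F x)"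

lemma lincomb_closed_real_linear_wrt: "lincomb_closed (real_linear_wrt sc)"
  unfolding lincomb_closed_def real_linear_wrt_def by (auto simp: algebra_simps)

text \<open>Updating position \<open>j\<close> of \<open>xs\<close> updates position \<open>c = card {y\<in>U. y < j}\<close> of
  \<open>nths xs U\<close> if \<open>j \<in> U\<close>, and the corresponding position of \<open>nths xs (-U)\<close> otherwise; the
  last position of \<open>xs\<close> is the last position of whichever of the two it lands in.\<close>

lemma lincomb_closed_sum_nsets_update:
  assumes P: "lincomb_closed P" and j: "j < length xs"
    and H1: "\<And>U c. U \<in> nsets {..<length xs} a \<Longrightarrow> j \<in> U \<Longrightarrow> c < a \<Longrightarrow>
      (Suc j = length xs \<Longrightarrow> Suc c = a) \<Longrightarrow> P (\<lambda>x. H U ((nths xs U)[c:=x]) (nths xs (-U)))"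
    and H2: "\<And>U c. U \<in> nsets {..<length xs} a \<Longrightarrow> j \<notin> U \<Longrightarrow> c < length xs - a \<Longrightarrow>
      (Suc j = length xs \<Longrightarrow> Suc c = length xs - a) \<Longrightarrow> P (\<lambda>x. H U (nths xs U) ((nths xs (-U))[c:=x]))"
  shows "P (\<lambda>x. \<Sum>U\<in>nsets {..<length xs} a. H U (nths (xs[j:=x]) U) (nths (xs[j:=x]) (-U)))"
proof (rule lincomb_closed_sum[OF P finite_nsets_lessThan])
  fix U assume U: "U \<in> nsets {..<length xs} a"
  show "P (\<lambda>x. H U (nths (xs[j:=x]) U) (nths (xs[j:=x]) (-U)))"
  proof (cases "j \<in> U")
    case True
    then show ?thesis
      using H1[OF U True card_less_in_nsets[OF U True]] by (simp add: nths_list_update[OF j])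
  next
    case False
    then have "j \<in> {..<length xs} - U" using j by simp
    note c = card_less_in_nsets[OF nsets_lessThan_Diff[OF U] this]
    have "{y\<in>-U. y < j} = {y\<in>{..<length xs} - U. y < j}" using j by auto
    then show ?thesis
      using H2[OF U False c] False by (simp add: nths_list_update[OF j])
  qed
qed

lemma is_cochain_linear_section:
  assumes "is_cochain sE sO d pair p \<omega>" "k \<le> p div 2" "length es = p - 2*k" "length as = k"
    and "i < length es"
  shows "real_linear_wrt sE (\<lambda>x. \<omega> k (es[i:=x]) as)"
  using assms(1)[unfolded is_cochain_def, rule_format, OF assms(2) conjI[OF assms(3,4)]] assms(5)
  unfolding real_linear_wrt_def by blast

lemma is_cochain_linear_form:
  assumes "is_cochain sE sO d pair p \<omega>" "k \<le> p div 2" "length es = p - 2*k" "length as = k"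
    and "i < length as"
  shows "real_linear_wrt sO (\<lambda>a. \<omega> k es (as[i:=a]))"
  using assms(1)[unfolded is_cochain_def, rule_format, OF assms(2) conjI[OF assms(3,4)]] assms(5)
  unfolding real_linear_wrt_def by blast

lemma is_cochain_mset:
  assumes "is_cochain sE sO d pair p \<omega>" "k \<le> p div 2" "length es = p - 2*k" "length as = k"
    and "mset as' = mset as"
  shows "\<omega> k es as' = \<omega> k es as"
  using assms(1)[unfolded is_cochain_def, rule_format, OF assms(2) conjI[OF assms(3,4)]] assms(5)
  by blast

lemma is_cochain_swap:
  assumes "is_cochain sE sO d pair p \<omega>" "k \<le> p div 2" "length (P @ [x,y] @ Q) = p - 2*k"
    and "length as = k"
  shows "\<omega> k (P@[x,y]@Q) as + \<omega> k (P@[y,x]@Q) as = - \<omega> (Suc k) (P@Q) (d (pair x y) # as)"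
proof -
  have "length P + 1 < p - 2*k" using assms(3) by simp
  from assms(1)[unfolded is_cochain_def, rule_format, OF assms(2) conjI[OF assms(3,4)],
      THEN conjunct2, THEN conjunct2, THEN conjunct2, rule_format, OF this]
  show ?thesis by (simp add: list_update_append nth_append)
qed

lemma is_cochainI:
  fixes \<omega> :: "nat \<Rightarrow> 'e::ab_group_add list \<Rightarrow> 'o::ab_group_add list \<Rightarrow> 'r::{comm_ring_1,real_algebra_1}"
  assumes linear_section: "\<And>k es as i. k \<le> p div 2 \<Longrightarrow> length es = p - 2*k \<Longrightarrow> length as = k \<Longrightarrow>
      i < length es \<Longrightarrow> real_linear_wrt sE (\<lambda>x. \<omega> k (es[i:=x]) as)"
    and linear_form: "\<And>k es as i. k \<le> p div 2 \<Longrightarrow> length es = p - 2*k \<Longrightarrow> length as = k \<Longrightarrow>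
      i < length as \<Longrightarrow> real_linear_wrt sO (\<lambda>a. \<omega> k es (as[i:=a]))"
    and symmetric: "\<And>k es as as'. k \<le> p div 2 \<Longrightarrow> length es = p - 2*k \<Longrightarrow> length as = k \<Longrightarrow>
      mset as' = mset as \<Longrightarrow> \<omega> k es as' = \<omega> k es as"
    and swap_pair: "\<And>k P Q x y as. k \<le> p div 2 \<Longrightarrow> length (P @ [x,y] @ Q) = p - 2*k \<Longrightarrow>
      length as = k \<Longrightarrow>
      \<omega> k (P@[x,y]@Q) as + \<omega> k (P@[y,x]@Q) as = - \<omega> (Suc k) (P@Q) (d (pair x y) # as)"
  shows "is_cochain sE sO d pair p \<omega>"
  unfolding is_cochain_def
proof (intro allI impI)
  fix k :: nat and es :: "'e list" and as :: "'o list"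
  assume k: "k \<le> p div 2" and l: "length es = p - 2*k \<and> length as = k"
  then have les: "length es = p - 2*k" and las: "length as = k" by simp_all
  have swap': "\<omega> k es as + \<omega> k (es[i := es ! (i+1), i+1 := es ! i]) as
      = - \<omega> (k+1) (take i es @ drop (i+2) es) (d (pair (es ! i) (es ! (i+1))) # as)"
    if i: "i + 1 < p - 2*k" for i
  proof -
    have es: "es = take i es @ [es ! i, es ! (i+1)] @ drop (i+2) es"
      using i les by (simp add: Cons_nth_drop_Suc)
    have "es[i := es ! (i+1), i+1 := es ! i] = take i es @ [es ! (i+1), es ! i] @ drop (i+2) es"
      using i les by (simp add: list_update_append Cons_nth_drop_Suc upd_conv_take_nth_drop)
    moreover have "length (take i es @ [es ! i, es ! (i+1)] @ drop (i+2) es) = p - 2*k"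
      using i les by simp
    ultimately show ?thesis
      using swap_pair[OF k _ las] es by (metis Suc_eq_plus1)
  qed
  have "\<forall>i<length es. real_linear_wrt sE (\<lambda>x. \<omega> k (es[i:=x]) as)"
    "\<forall>i<length as. real_linear_wrt sO (\<lambda>a. \<omega> k es (as[i:=a]))"
    "\<forall>as'. mset as' = mset as \<longrightarrow> \<omega> k es as' = \<omega> k es as"
    "\<forall>i. i + 1 < p - 2*k \<longrightarrow> \<omega> k es as + \<omega> k (es[i := es ! (i+1), i+1 := es ! i]) as
      = - \<omega> (k+1) (take i es @ drop (i+2) es) (d (pair (es ! i) (es ! (i+1))) # as)"
    by (intro allI impI linear_section[OF k les las] linear_form[OF k les las] symmetric[OF k les las]
        swap'; assumption)+
  then show "(\<forall>i<length es.
          (\<forall>x y. \<omega> k (es[i := x + y]) as = \<omega> k (es[i := x]) as + \<omega> k (es[i := y]) as) \<and>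
          (\<forall>c x. \<omega> k (es[i := sE (of_real c) x]) as = of_real c * \<omega> k (es[i := x]) as)) \<and>
        (\<forall>i<length as.
          (\<forall>x y. \<omega> k es (as[i := x + y]) = \<omega> k es (as[i := x]) + \<omega> k es (as[i := y])) \<and>
          (\<forall>c x. \<omega> k es (as[i := sO (of_real c) x]) = of_real c * \<omega> k es (as[i := x]))) \<and>
        (\<forall>as'. mset as' = mset as \<longrightarrow> \<omega> k es as' = \<omega> k es as) \<and>
        (\<forall>i. i + 1 < p - 2*k \<longrightarrow>
          \<omega> k es as + \<omega> k (es[i := es ! (i+1), i+1 := es ! i]) as
          = - \<omega> (k+1) (take i es @ drop (i+2) es) (d (pair (es ! i) (es ! (i+1))) # as))"
    unfolding real_linear_wrt_def by (intro conjI)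
qed

lemma in_D_order_section:
  assumes "in_D sE sO d pair p m \<omega>" "k \<le> p div 2" "length es = p - 2*k" "length as = k"
    and "i < length es"
  shows "has_order sE (if Suc i = length es then m - 1 else m) (\<lambda>x. \<omega> k (es[i:=x]) as)"
  using assms(1)[unfolded in_D_def, THEN conjunct2, rule_format, OF assms(2) conjI[OF assms(3,4)]]
    assms(5)
  by simp

lemma in_D_order_form:
  assumes "in_D sE sO d pair p m \<omega>" "k \<le> p div 2" "length es = p - 2*k" "length as = k"
    and "i < length as"
  shows "has_order sO m (\<lambda>a. \<omega> k es (as[i:=a]))"
  using assms(1)[unfolded in_D_def, THEN conjunct2, rule_format, OF assms(2) conjI[OF assms(3,4)]]
    assms(5)
  by simp

lemma in_DI:
  assumes "is_cochain sE sO d pair p \<omega>"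
    and "\<And>k es as i. k \<le> p div 2 \<Longrightarrow> length es = p - 2*k \<Longrightarrow> length as = k \<Longrightarrow>
      i < length as \<Longrightarrow> has_order sO m (\<lambda>a. \<omega> k es (as[i:=a]))"
    and "\<And>k es as i. k \<le> p div 2 \<Longrightarrow> length es = p - 2*k \<Longrightarrow> length as = k \<Longrightarrow>
      i < length es \<Longrightarrow> has_order sE (if Suc i = length es then m - 1 else m) (\<lambda>x. \<omega> k (es[i:=x]) as)"
  shows "in_D sE sO d pair p m \<omega>"
  using assms unfolding in_D_def by simp

section \<open>The product of cochains\<close>

definition product_range :: "nat \<Rightarrow> nat \<Rightarrow> nat \<Rightarrow> nat set" where
  "product_range p q k = {i. i \<le> k \<and> i \<le> p div 2 \<and> k - i \<le> q div 2}"

lemma cprod_summand_eq_shuffle_sum: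
  assumes "i \<le> k" "2*i \<le> p" "2*(k-i) \<le> q" "length es = p + q - 2*k" "length as = k"
  shows "(\<Sum>\<sigma>\<in>shuffles (p - 2*i) (q - 2*(k-i)). \<Sum>\<tau>\<in>shuffles i (k-i).
        of_int (sign \<sigma>) * \<omega> i (map (\<lambda>l. es ! \<sigma> l) [0..<p - 2*i]) (map (\<lambda>l. as ! \<tau> l) [0..<i]) *
        \<eta> (k-i) (map (\<lambda>l. es ! \<sigma> l) [p - 2*i..<p + q - 2*k]) (map (\<lambda>l. as ! \<tau> l) [i..<k]))
     = shuffle_sum (p - 2*i) (\<lambda>X Y. forms_product i (\<omega> i X) (\<eta> (k-i) Y) as) es"
    (is "?lhs = ?rhs")
proof -
  have les: "length es = (p - 2*i) + (q - 2*(k-i))" "length as = i + (k - i)"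
    and ends: "p + q - 2*k = (p - 2*i) + (q - 2*(k-i))" "k = i + (k - i)"
    using assms by auto
  have forms: "(\<Sum>\<tau>\<in>shuffles i (k-i).
        \<omega> i X (map (\<lambda>l. as ! \<tau> l) [0..<i]) * \<eta> (k-i) Y (map (\<lambda>l. as ! \<tau> l) [i..<k]))
      = forms_product i (\<omega> i X) (\<eta> (k-i) Y) as" for X Y
    using sum_shuffles_eq_sum_nsets[OF les(2), of "\<lambda>_ Z Z'. \<omega> i X Z * \<eta> (k-i) Y Z'"]
    unfolding ends(2)[symmetric] forms_product_def assms(5) by simp
  have "?lhs = (\<Sum>\<sigma>\<in>shuffles (p - 2*i) (q - 2*(k-i)). of_int (sign \<sigma>) *
        forms_product i (\<omega> i (map (\<lambda>l. es ! \<sigma> l) [0..<p - 2*i]))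
          (\<eta> (k-i) (map (\<lambda>l. es ! \<sigma> l) [p - 2*i..<p + q - 2*k])) as)"
    by (simp only: forms[symmetric] sum_distrib_left mult.assoc)
  also have "\<dots> = ?rhs"
    using sum_shuffles_eq_sum_nsets[OF les(1),
        of "\<lambda>s X Y. of_int s * forms_product i (\<omega> i X) (\<eta> (k-i) Y) as"]
    unfolding ends(1) shuffle_sum_def shuffle_term_def les(1) by simp
  finally show ?thesis .
qed

lemma cprod_eq_shuffle_sum:
  assumes "length es = p + q - 2*k" "length as = k"
  shows "cprod p \<omega> q \<eta> k es as = (\<Sum>i\<in>product_range p q k.
     shuffle_sum (p - 2*i) (\<lambda>X Y. forms_product i (\<omega> i X) (\<eta> (k-i) Y) as) es)"
  unfolding cprod_def product_range_def
  by (rule sum.cong[OF refl], rule cprod_summand_eq_shuffle_sum) (use assms in auto)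

lemma cprod_update_section:
  assumes P: "lincomb_closed P" and les: "length es = p + q - 2*k" and las: "length as = k"
    and j: "j < length es"
    and H\<omega>: "\<And>i X Z c. i \<in> product_range p q k \<Longrightarrow> length X = p - 2*i \<Longrightarrow> length Z = i \<Longrightarrow>
      c < length X \<Longrightarrow> (Suc j = length es \<Longrightarrow> Suc c = length X) \<Longrightarrow> P (\<lambda>x. \<omega> i (X[c:=x]) Z)"
    and H\<eta>: "\<And>i Y Z c. i \<in> product_range p q k \<Longrightarrow> length Y = q - 2*(k-i) \<Longrightarrow> length Z = k - i \<Longrightarrow>
      c < length Y \<Longrightarrow> (Suc j = length es \<Longrightarrow> Suc c = length Y) \<Longrightarrow> P (\<lambda>x. \<eta> (k-i) (Y[c:=x]) Z)"
  shows "P (\<lambda>x. cprod p \<omega> q \<eta> k (es[j:=x]) as)"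
proof -
  have "P (\<lambda>x. \<Sum>i\<in>product_range p q k.
      shuffle_sum (p - 2*i) (\<lambda>X Y. forms_product i (\<omega> i X) (\<eta> (k-i) Y) as) (es[j:=x]))"
  proof (rule lincomb_closed_sum[OF P])
    show "finite (product_range p q k)" by (simp add: product_range_def)
    fix i assume i: "i \<in> product_range p q k"
    then have len_Y: "length es - (p - 2*i) = q - 2*(k-i)" using les by (auto simp: product_range_def)
    show "P (\<lambda>x. shuffle_sum (p - 2*i) (\<lambda>X Y. forms_product i (\<omega> i X) (\<eta> (k-i) Y) as) (es[j:=x]))"
      unfolding shuffle_sum_def shuffle_term_def length_list_update
    proof (rule lincomb_closed_sum_nsets_update[OF P j])
      fix U c assume U: "U \<in> nsets {..<length es} (p - 2*i)" and c: "c < p - 2*i"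
        and last: "Suc j = length es \<Longrightarrow> Suc c = p - 2*i"
      show "P (\<lambda>x. of_int (subset_sign (p - 2*i) U) *
          forms_product i (\<omega> i ((nths es U)[c:=x])) (\<eta> (k-i) (nths es (-U))) as)"
        unfolding forms_product_def
      proof (rule lincomb_closed_mult_left[OF P], rule lincomb_closed_sum[OF P finite_nsets_lessThan],
          rule lincomb_closed_mult_right[OF P], rule H\<omega>[OF i])
        fix T assume "T \<in> nsets {..<length as} i"
        then show "length (nths as T) = i" by (rule length_nths_nsets)
      qed (use length_nths_nsets[OF U] c last in auto)
    next
      fix U c assume U: "U \<in> nsets {..<length es} (p - 2*i)" and c: "c < length es - (p - 2*i)"
        and last: "Suc j = length es \<Longrightarrow> Suc c = length es - (p - 2*i)"
      show "P (\<lambda>x. of_int (subset_sign (p - 2*i) U) *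
          forms_product i (\<omega> i (nths es U)) (\<eta> (k-i) ((nths es (-U))[c:=x])) as)"
        unfolding forms_product_def
      proof (rule lincomb_closed_mult_left[OF P], rule lincomb_closed_sum[OF P finite_nsets_lessThan],
          rule lincomb_closed_mult_left[OF P], rule H\<eta>[OF i])
        fix T assume "T \<in> nsets {..<length as} i"
        then show "length (nths as (-T)) = k - i" using las by (simp add: length_nths_nsets)
      qed (use length_nths_nsets[OF U] c last len_Y in auto)
    qed
  qed
  then show ?thesis by (simp add: cprod_eq_shuffle_sum les las)
qed

lemma cprod_update_form:
  assumes P: "lincomb_closed P" and les: "length es = p + q - 2*k" and las: "length as = k"
    and j: "j < length as"
    and H\<omega>: "\<And>i X Z c. i \<in> product_range p q k \<Longrightarrow> length X = p - 2*i \<Longrightarrow> length Z = i \<Longrightarrow>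
      c < i \<Longrightarrow> P (\<lambda>x. \<omega> i X (Z[c:=x]))"
    and H\<eta>: "\<And>i Y Z c. i \<in> product_range p q k \<Longrightarrow> length Y = q - 2*(k-i) \<Longrightarrow> length Z = k - i \<Longrightarrow>
      c < k - i \<Longrightarrow> P (\<lambda>x. \<eta> (k-i) Y (Z[c:=x]))"
  shows "P (\<lambda>x. cprod p \<omega> q \<eta> k es (as[j:=x]))"
proof -
  have "P (\<lambda>x. \<Sum>i\<in>product_range p q k.
      shuffle_sum (p - 2*i) (\<lambda>X Y. forms_product i (\<omega> i X) (\<eta> (k-i) Y) (as[j:=x])) es)"
  proof (rule lincomb_closed_sum[OF P])
    show "finite (product_range p q k)" by (simp add: product_range_def)
    fix i assume i: "i \<in> product_range p q k"
    show "P (\<lambda>x. shuffle_sum (p - 2*i) (\<lambda>X Y. forms_product i (\<omega> i X) (\<eta> (k-i) Y) (as[j:=x])) es)"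
      unfolding shuffle_sum_def shuffle_term_def
    proof (rule lincomb_closed_sum[OF P finite_nsets_lessThan], rule lincomb_closed_mult_left[OF P])
      fix U assume U: "U \<in> nsets {..<length es} (p - 2*i)"
      have X: "length (nths es U) = p - 2*i" and Y: "length (nths es (-U)) = q - 2*(k-i)"
        using length_nths_nsets[OF U] les i by (auto simp: product_range_def)
      show "P (\<lambda>x. forms_product i (\<omega> i (nths es U)) (\<eta> (k-i) (nths es (-U))) (as[j:=x]))"
        unfolding forms_product_def length_list_update
      proof (rule lincomb_closed_sum_nsets_update[OF P j])
        fix T c assume T: "T \<in> nsets {..<length as} i" and c: "c < i"
        show "P (\<lambda>x. \<omega> i (nths es U) ((nths as T)[c:=x]) * \<eta> (k-i) (nths es (-U)) (nths as (-T)))"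
          by (rule lincomb_closed_mult_right[OF P], rule H\<omega>[OF i X])
            (use length_nths_nsets[OF T] c in auto)
      next
        fix T c assume T: "T \<in> nsets {..<length as} i" and c: "c < length as - i"
        show "P (\<lambda>x. \<omega> i (nths es U) (nths as T) * \<eta> (k-i) (nths es (-U)) ((nths as (-T))[c:=x]))"
          by (rule lincomb_closed_mult_left[OF P], rule H\<eta>[OF i Y])
            (use length_nths_nsets[OF T] c las in auto)
      qed
    qed
  qed
  then show ?thesis by (simp add: cprod_eq_shuffle_sum les las)
qed

lemma cprod_linear_section:
  assumes \<omega>: "is_cochain sE sO d pair p \<omega>" and \<eta>: "is_cochain sE sO d pair q \<eta>"
    and "length es = p + q - 2*k" "length as = k" "j < length es"
  shows "real_linear_wrt sE (\<lambda>x. cprod p \<omega> q \<eta> k (es[j:=x]) as)"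
  using assms(3-5)
  by (rule cprod_update_section[OF lincomb_closed_real_linear_wrt])
    (auto intro: is_cochain_linear_section[OF \<omega>] is_cochain_linear_section[OF \<eta>]
      simp: product_range_def)

lemma cprod_linear_form:
  assumes \<omega>: "is_cochain sE sO d pair p \<omega>" and \<eta>: "is_cochain sE sO d pair q \<eta>"
    and "length es = p + q - 2*k" "length as = k" "j < length as"
  shows "real_linear_wrt sO (\<lambda>x. cprod p \<omega> q \<eta> k es (as[j:=x]))"
  using assms(3-5)
  by (rule cprod_update_form[OF lincomb_closed_real_linear_wrt])
    (auto intro: is_cochain_linear_form[OF \<omega>] is_cochain_linear_form[OF \<eta>] simp: product_range_def)

lemma cprod_order_section:
  fixes \<omega> \<eta> :: "nat \<Rightarrow> 'e::ab_group_add list \<Rightarrow> 'o::ab_group_add list \<Rightarrow> 'r::{comm_ring_1,real_algebra_1}"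
  assumes \<omega>: "in_D sE sO d pair p m \<omega>" and \<eta>: "in_D sE sO d pair q n \<eta>"
    and les: "length es = p + q - 2*k" and las: "length as = k" and j: "j < length es"
  shows "has_order sE (if Suc j = length es then max m n - 1 else max m n)
      (\<lambda>x. cprod p \<omega> q \<eta> k (es[j:=x]) as)"
proof (rule cprod_update_section[OF lincomb_closed_has_order les las j])
  fix i c :: nat and X :: "'e list" and Z :: "'o list"
  assume i: "i \<in> product_range p q k" and X: "length X = p - 2*i" "length Z = i"
    and c: "c < length X" and last: "Suc j = length es \<Longrightarrow> Suc c = length X"
  have "has_order sE (if Suc c = length X then m - 1 else m) (\<lambda>x. \<omega> i (X[c:=x]) Z)"
    using in_D_order_section[OF \<omega> _ X c] i by (simp add: product_range_def)
  then show "has_order sE (if Suc j = length es then max m n - 1 else max m n)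
      (\<lambda>x. \<omega> i (X[c:=x]) Z)"
    by (rule has_order_mono) (use last in auto)
next
  fix i c :: nat and Y :: "'e list" and Z :: "'o list"
  assume i: "i \<in> product_range p q k" and Y: "length Y = q - 2*(k-i)" "length Z = k - i"
    and c: "c < length Y" and last: "Suc j = length es \<Longrightarrow> Suc c = length Y"
  have "has_order sE (if Suc c = length Y then n - 1 else n) (\<lambda>x. \<eta> (k-i) (Y[c:=x]) Z)"
    using in_D_order_section[OF \<eta> _ Y c] i by (simp add: product_range_def)
  then show "has_order sE (if Suc j = length es then max m n - 1 else max m n)
      (\<lambda>x. \<eta> (k-i) (Y[c:=x]) Z)"
    by (rule has_order_mono) (use last in auto)
qed

lemma cprod_order_form:
  fixes \<omega> \<eta> :: "nat \<Rightarrow> 'e::ab_group_add list \<Rightarrow> 'o::ab_group_add list \<Rightarrow> 'r::{comm_ring_1,real_algebra_1}"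
  assumes \<omega>: "in_D sE sO d pair p m \<omega>" and \<eta>: "in_D sE sO d pair q n \<eta>"
    and les: "length es = p + q - 2*k" and las: "length as = k" and j: "j < length as"
  shows "has_order sO (max m n) (\<lambda>x. cprod p \<omega> q \<eta> k es (as[j:=x]))"
proof (rule cprod_update_form[OF lincomb_closed_has_order les las j])
  fix i c :: nat and X :: "'e list" and Z :: "'o list"
  assume "i \<in> product_range p q k" "length X = p - 2*i" "length Z = i" "c < i"
  then show "has_order sO (max m n) (\<lambda>x. \<omega> i X (Z[c:=x]))"
    by (intro has_order_mono[OF in_D_order_form[OF \<omega>]]) (auto simp: product_range_def)
next
  fix i c :: nat and Y :: "'e list" and Z :: "'o list"
  assume "i \<in> product_range p q k" "length Y = q - 2*(k-i)" "length Z = k - i" "c < k - i"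
  then show "has_order sO (max m n) (\<lambda>x. \<eta> (k-i) Y (Z[c:=x]))"
    by (intro has_order_mono[OF in_D_order_form[OF \<eta>]]) (auto simp: product_range_def)
qed

lemma cprod_mset_eq:
  fixes \<omega> \<eta> :: "nat \<Rightarrow> 'e::ab_group_add list \<Rightarrow> 'o::ab_group_add list \<Rightarrow> 'r::{comm_ring_1,real_algebra_1}"
  assumes \<omega>: "is_cochain sE sO d pair p \<omega>" and \<eta>: "is_cochain sE sO d pair q \<eta>"
    and les: "length es = p + q - 2*k" and las: "length as = k" and m: "mset as' = mset as"
  shows "cprod p \<omega> q \<eta> k es as' = cprod p \<omega> q \<eta> k es as"
proof -
  have las': "length as' = k" using mset_eq_length[OF m] las by simp
  show ?thesis
    unfolding cprod_eq_shuffle_sum[OF les las] cprod_eq_shuffle_sum[OF les las']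
  proof (rule sum.cong[OF refl], rule shuffle_sum_cong, rule forms_product_mset_eq[OF m])
    fix i :: nat and X Y :: "'e list" and Z Z' :: "'o list"
    assume i: "i \<in> product_range p q k" and X: "length X = p - 2*i"
      and Y: "length Y = length es - (p - 2*i)"
    show "length Z = i \<Longrightarrow> mset Z' = mset Z \<Longrightarrow> \<omega> i X Z' = \<omega> i X Z"
      using i X by (intro is_cochain_mset[OF \<omega>]) (auto simp: product_range_def)
    show "length Z = length as - i \<Longrightarrow> mset Z' = mset Z \<Longrightarrow> \<eta> (k-i) Y Z' = \<eta> (k-i) Y Z"
      using i Y les las by (intro is_cochain_mset[OF \<eta>]) (auto simp: product_range_def)
  qed
qed

lemma cprod_summand_swap:
  fixes \<omega> \<eta> :: "nat \<Rightarrow> 'e::ab_group_add list \<Rightarrow> 'o::ab_group_add list \<Rightarrow> 'r::{comm_ring_1,real_algebra_1}"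
  assumes \<omega>: "is_cochain sE sO d pair p \<omega>" and \<eta>: "is_cochain sE sO d pair q \<eta>"
    and i: "i \<in> product_range p q k"
    and les: "length L + 2 + length R = p + q - 2*k" and las: "length as = k"
  shows "shuffle_sum (p - 2*i) (\<lambda>X Y. forms_product i (\<omega> i X) (\<eta> (k-i) Y) as) (L@[u,v]@R)
       + shuffle_sum (p - 2*i) (\<lambda>X Y. forms_product i (\<omega> i X) (\<eta> (k-i) Y) as) (L@[v,u]@R)
     = (if 2 \<le> p - 2*i then shuffle_sum (p - 2*i - 2)
          (\<lambda>X Y. - forms_product i (\<lambda>Z. \<omega> (Suc i) X (d (pair u v) # Z)) (\<eta> (k-i) Y) as) (L@R) else 0)
       + (if 2 \<le> q - 2*(k-i) then shuffle_sum (p - 2*i)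
          (\<lambda>X Y. - forms_product i (\<omega> i X) (\<lambda>Z. \<eta> (Suc (k-i)) Y (d (pair u v) # Z)) as) (L@R) else 0)"
proof (rule shuffle_sum_swap)
  have i': "i \<le> k" "2*i \<le> p" "2*(k-i) \<le> q" using i by (auto simp: product_range_def)
  then show "length L + 2 + length R = (p - 2*i) + (q - 2*(k-i))" using les by simp
next
  fix P Q Y :: "'e list" assume PQ: "length P + 2 + length Q = p - 2*i"
  have "\<omega> i (P@[u,v]@Q) Z + \<omega> i (P@[v,u]@Q) Z = - \<omega> (Suc i) (P@Q) (d (pair u v) # Z)"
    if "length Z = i" for Z
    using is_cochain_swap[OF \<omega> _ _ that] i PQ by (simp add: product_range_def)
  then show "forms_product i (\<omega> i (P@[u,v]@Q)) (\<eta> (k-i) Y) as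
      + forms_product i (\<omega> i (P@[v,u]@Q)) (\<eta> (k-i) Y) as
      = - forms_product i (\<lambda>Z. \<omega> (Suc i) (P@Q) (d (pair u v) # Z)) (\<eta> (k-i) Y) as"
    unfolding forms_product_add_left forms_product_minus_left[symmetric]
    by (intro forms_product_cong) simp_all
next
  fix X P Q :: "'e list" assume PQ: "length P + 2 + length Q = q - 2*(k-i)"
  have "\<eta> (k-i) (P@[u,v]@Q) Z + \<eta> (k-i) (P@[v,u]@Q) Z = - \<eta> (Suc (k-i)) (P@Q) (d (pair u v) # Z)"
    if "length Z = length as - i" for Z
    using is_cochain_swap[OF \<eta> _ _ that] i PQ las by (simp add: product_range_def)
  then show "forms_product i (\<omega> i X) (\<eta> (k-i) (P@[u,v]@Q)) as
      + forms_product i (\<omega> i X) (\<eta> (k-i) (P@[v,u]@Q)) as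
      = - forms_product i (\<omega> i X) (\<lambda>Z. \<eta> (Suc (k-i)) (P@Q) (d (pair u v) # Z)) as"
    unfolding forms_product_add_right forms_product_minus_right[symmetric]
    by (intro forms_product_cong) simp_all
qed

lemma cprod_Cons_form:
  assumes "length es = p + q - 2 * Suc k" "length as = k"
  shows "cprod p \<omega> q \<eta> (Suc k) es (\<alpha> # as) = (\<Sum>i\<in>product_range p q (Suc k).
     (if i = 0 then 0
      else shuffle_sum (p - 2*i) (\<lambda>X Y. forms_product (i - 1) (\<lambda>Z. \<omega> i X (\<alpha> # Z)) (\<eta> (Suc k - i) Y) as) es)
     + shuffle_sum (p - 2*i) (\<lambda>X Y. forms_product i (\<omega> i X) (\<lambda>Z. \<eta> (Suc k - i) Y (\<alpha> # Z)) as) es)"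
proof -
  have "cprod p \<omega> q \<eta> (Suc k) es (\<alpha> # as) = (\<Sum>i\<in>product_range p q (Suc k).
      shuffle_sum (p - 2*i) (\<lambda>X Y. forms_product i (\<omega> i X) (\<eta> (Suc k - i) Y) (\<alpha> # as)) es)"
    by (rule cprod_eq_shuffle_sum) (use assms in simp_all)
  also have "\<dots> = (\<Sum>i\<in>product_range p q (Suc k).
     (if i = 0 then 0
      else shuffle_sum (p - 2*i) (\<lambda>X Y. forms_product (i - 1) (\<lambda>Z. \<omega> i X (\<alpha> # Z)) (\<eta> (Suc k - i) Y) as) es)
     + shuffle_sum (p - 2*i) (\<lambda>X Y. forms_product i (\<omega> i X) (\<lambda>Z. \<eta> (Suc k - i) Y (\<alpha> # Z)) as) es)"
  proof (rule sum.cong[OF refl])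
    fix i show "shuffle_sum (p - 2*i) (\<lambda>X Y. forms_product i (\<omega> i X) (\<eta> (Suc k - i) Y) (\<alpha> # as)) es
      = (if i = 0 then 0
         else shuffle_sum (p - 2*i) (\<lambda>X Y. forms_product (i - 1) (\<lambda>Z. \<omega> i X (\<alpha> # Z)) (\<eta> (Suc k - i) Y) as) es)
        + shuffle_sum (p - 2*i) (\<lambda>X Y. forms_product i (\<omega> i X) (\<lambda>Z. \<eta> (Suc k - i) Y (\<alpha> # Z)) as) es"
      by (cases i) (simp_all add: forms_product_0_Cons forms_product_Suc_Cons shuffle_sum_add)
  qed
  finally show ?thesis .
qed

lemma sum_product_range_Suc_shift:
  "(\<Sum>i\<in>product_range p q k. if 2 \<le> p - 2*i then g (Suc i) else 0)
     = (\<Sum>i\<in>product_range p q (Suc k). if i = 0 then 0 else g i)"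
proof -
  have fin: "finite (product_range p q k')" for k' by (simp add: product_range_def)
  have "(\<Sum>i\<in>product_range p q k. if 2 \<le> p - 2*i then g (Suc i) else 0)
      = (\<Sum>i\<in>{i\<in>product_range p q k. 2 \<le> p - 2*i}. g (Suc i))"
    by (simp add: sum.inter_filter[OF fin])
  also have "{i\<in>product_range p q k. 2 \<le> p - 2*i} = Suc -` (product_range p q (Suc k) - {0})"
    by (auto simp: product_range_def)
  also have "(\<Sum>i\<in>Suc -` (product_range p q (Suc k) - {0}). g (Suc i))
      = (\<Sum>i\<in>product_range p q (Suc k) - {0}. g i)"
  proof (rule sym, rule sum.reindex_cong[OF inj_on_subset[OF inj_Suc subset_UNIV]])
    show "product_range p q (Suc k) - {0} = Suc ` (Suc -` (product_range p q (Suc k) - {0}))"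
      by (rule sym, rule image_Suc_vimage_Suc) simp
  qed simp
  also have "\<dots> = (\<Sum>i\<in>product_range p q (Suc k). if i = 0 then 0 else g i)"
    by (simp add: sum.If_cases[OF fin] Diff_eq)
  finally show ?thesis .
qed

lemma sum_product_range_Suc:
  assumes "g (Suc k) = 0"
  shows "(\<Sum>i\<in>product_range p q k. if 2 \<le> q - 2*(k-i) then g i else 0)
     = (\<Sum>i\<in>product_range p q (Suc k). g i)"
proof -
  have fin: "finite (product_range p q k')" for k' by (simp add: product_range_def)
  have "(\<Sum>i\<in>product_range p q k. if 2 \<le> q - 2*(k-i) then g i else 0)
      = (\<Sum>i\<in>{i\<in>product_range p q k. 2 \<le> q - 2*(k-i)}. g i)"
    by (simp add: sum.inter_filter[OF fin])
  also have "{i\<in>product_range p q k. 2 \<le> q - 2*(k-i)} = product_range p q (Suc k) - {Suc k}"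
    by (auto simp: product_range_def)
  also have "(\<Sum>i\<in>product_range p q (Suc k) - {Suc k}. g i) = (\<Sum>i\<in>product_range p q (Suc k). g i)"
    using assms by (intro sum.mono_neutral_left fin) auto
  finally show ?thesis .
qed

lemma cprod_swap:
  fixes \<omega> \<eta> :: "nat \<Rightarrow> 'e::ab_group_add list \<Rightarrow> 'o::ab_group_add list \<Rightarrow> 'r::{comm_ring_1,real_algebra_1}"
  assumes \<omega>: "is_cochain sE sO d pair p \<omega>" and \<eta>: "is_cochain sE sO d pair q \<eta>"
    and les: "length L + 2 + length R = p + q - 2*k" and las: "length as = k"
  shows "cprod p \<omega> q \<eta> k (L@[u,v]@R) as + cprod p \<omega> q \<eta> k (L@[v,u]@R) as
     = - cprod p \<omega> q \<eta> (Suc k) (L@R) (d (pair u v) # as)"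
proof -
  define \<alpha> where "\<alpha> = d (pair u v)"
  define A where "A i = shuffle_sum (p - 2*i)
      (\<lambda>X Y. forms_product (i - 1) (\<lambda>Z. \<omega> i X (\<alpha> # Z)) (\<eta> (Suc k - i) Y) as) (L@R)" for i
  define B where "B i = shuffle_sum (p - 2*i)
      (\<lambda>X Y. forms_product i (\<omega> i X) (\<lambda>Z. \<eta> (Suc k - i) Y (\<alpha> # Z)) as) (L@R)" for i
  \<comment> \<open>Swapping inside \<open>\<omega>\<close> passes \<open>\<alpha>\<close> to the 1-forms of \<open>\<omega> (Suc i)\<close>,
    swapping inside \<open>\<eta>\<close> to those of \<open>\<eta> (Suc (k - i))\<close>.\<close>
  have summand: "shuffle_sum (p - 2*i) (\<lambda>X Y. forms_product i (\<omega> i X) (\<eta> (k-i) Y) as) (L@[u,v]@R)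
      + shuffle_sum (p - 2*i) (\<lambda>X Y. forms_product i (\<omega> i X) (\<eta> (k-i) Y) as) (L@[v,u]@R)
      = (if 2 \<le> p - 2*i then - A (Suc i) else 0) + (if 2 \<le> q - 2*(k-i) then - B i else 0)"
    if i: "i \<in> product_range p q k" for i
  proof -
    have "Suc (k - i) = Suc k - i" "p - 2*i - 2 = p - 2 * Suc i"
      using i by (auto simp: product_range_def)
    then show ?thesis
      using cprod_summand_swap[OF \<omega> \<eta> i les las, of u v]
      by (simp add: A_def B_def \<alpha>_def shuffle_sum_minus)
  qed
  have len: "length (L @ [w, w'] @ R) = p + q - 2*k" for w w' using les by simp
  have "cprod p \<omega> q \<eta> k (L@[u,v]@R) as + cprod p \<omega> q \<eta> k (L@[v,u]@R) as
      = (\<Sum>i\<in>product_range p q k. if 2 \<le> p - 2*i then - A (Suc i) else 0)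
        + (\<Sum>i\<in>product_range p q k. if 2 \<le> q - 2*(k-i) then - B i else 0)"
    unfolding cprod_eq_shuffle_sum[OF len las] sum.distrib[symmetric]
    by (rule sum.cong[OF refl], rule summand)
  also have "\<dots> = (\<Sum>i\<in>product_range p q (Suc k). if i = 0 then 0 else - A i)
        + (\<Sum>i\<in>product_range p q (Suc k). - B i)"
  proof -
    have "B (Suc k) = 0" using las by (simp add: B_def forms_product_eq_0 shuffle_sum_zero)
    then show ?thesis
      using sum_product_range_Suc_shift[where g="\<lambda>i. - A i" and p=p and q=q and k=k]
        sum_product_range_Suc[where g="\<lambda>i. - B i" and p=p and q=q and k=k]
      by simp
  qed
  also have "\<dots> = - (\<Sum>i\<in>product_range p q (Suc k). (if i = 0 then 0 else A i) + B i)"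
  proof -
    have "(if i = 0 then 0 else - A i) = - (if i = 0 then 0 else A i)" for i by simp
    then show ?thesis by (simp only: sum_negf sum.distrib minus_add_distrib)
  qed
  also have "\<dots> = - cprod p \<omega> q \<eta> (Suc k) (L@R) (\<alpha> # as)"
  proof -
    have "length (L@R) = p + q - 2 * Suc k" using les by simp
    from cprod_Cons_form[OF this las, of \<omega> \<eta> \<alpha>] show ?thesis by (simp only: A_def B_def)
  qed
  finally show ?thesis by (simp only: \<alpha>_def)
qed

lemma is_cochain_cprod:
  fixes \<omega> \<eta> :: "nat \<Rightarrow> 'e::ab_group_add list \<Rightarrow> 'o::ab_group_add list \<Rightarrow> 'r::{comm_ring_1,real_algebra_1}"
  assumes \<omega>: "is_cochain sE sO d pair p \<omega>" and \<eta>: "is_cochain sE sO d pair q \<eta>"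
  shows "is_cochain sE sO d pair (p + q) (cprod p \<omega> q \<eta>)"
proof (rule is_cochainI)
  fix k i :: nat and es :: "'e list" and as :: "'o list"
  assume "length es = p + q - 2*k" "length as = k" "i < length es"
  then show "real_linear_wrt sE (\<lambda>x. cprod p \<omega> q \<eta> k (es[i:=x]) as)"
    by (rule cprod_linear_section[OF \<omega> \<eta>])
next
  fix k i :: nat and es :: "'e list" and as :: "'o list"
  assume "length es = p + q - 2*k" "length as = k" "i < length as"
  then show "real_linear_wrt sO (\<lambda>a. cprod p \<omega> q \<eta> k es (as[i:=a]))"
    by (rule cprod_linear_form[OF \<omega> \<eta>])
next
  fix k :: nat and es :: "'e list" and as as' :: "'o list"
  assume "length es = p + q - 2*k" "length as = k" "mset as' = mset as"
  then show "cprod p \<omega> q \<eta> k es as' = cprod p \<omega> q \<eta> k es as"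
    by (rule cprod_mset_eq[OF \<omega> \<eta>])
next
  fix k :: nat and P Q :: "'e list" and x y :: 'e and as :: "'o list"
  assume "length (P @ [x,y] @ Q) = p + q - 2*k" "length as = k"
  then show "cprod p \<omega> q \<eta> k (P@[x,y]@Q) as + cprod p \<omega> q \<eta> k (P@[y,x]@Q) as
      = - cprod p \<omega> q \<eta> (Suc k) (P@Q) (d (pair x y) # as)"
    by (intro cprod_swap[OF \<omega> \<eta>]) simp_all
qed

theorem mainTheorem4:
  fixes sE :: "'r::{comm_ring_1,real_algebra_1} \<Rightarrow> 'e::ab_group_add \<Rightarrow> 'e"
    and sO :: "'r \<Rightarrow> 'o::ab_group_add \<Rightarrow> 'o"
    and d :: "'r \<Rightarrow> 'o" and pair :: "'e \<Rightarrow> 'e \<Rightarrow> 'r"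
    and \<omega> \<eta> :: "nat \<Rightarrow> 'e list \<Rightarrow> 'o list \<Rightarrow> 'r"
    and p q m n :: nat
  assumes "CD_data sE sO d pair"
    and "1 \<le> m" and "1 \<le> n"
    and "in_D sE sO d pair p m \<omega>"
    and "in_D sE sO d pair q n \<eta>"
  shows "in_D sE sO d pair (p + q) (max m n) (cprod p \<omega> q \<eta>)"
proof (rule in_DI)
  show "is_cochain sE sO d pair (p + q) (cprod p \<omega> q \<eta>)"
    using assms(4,5) by (intro is_cochain_cprod) (simp_all add: in_D_def)
next
  fix k i :: nat and es :: "'e list" and as :: "'o list"
  assume "length es = p + q - 2*k" "length as = k" "i < length as"
  then show "has_order sO (max m n) (\<lambda>a. cprod p \<omega> q \<eta> k es (as[i:=a]))"
    by (rule cprod_order_form[OF assms(4,5)])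
next
  fix k i :: nat and es :: "'e list" and as :: "'o list"
  assume "length es = p + q - 2*k" "length as = k" "i < length es"
  then show "has_order sE (if Suc i = length es then max m n - 1 else max m n)
      (\<lambda>x. cprod p \<omega> q \<eta> k (es[i:=x]) as)"
    by (rule cprod_order_section[OF assms(4,5)])
qed

end
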